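(* Let $N$ be the coarse-grained compartment model whose internal chemistry is the one-species network $0\to S$ (rate constant $\kappa_b\ge0$), $S\to0$ (rate constant $\kappa_d\ge0$), with compartment parameters $\kappa_I,\kappa_E,\kappa_F,\kappa_C\ge0$, arbitrary inflow distribution $\mu$ on $\mathbb Z_{\ge0}$ (not necessarily with finite mean), and arbitrary fragmentation kernel $\psi$. For every choice of these parameters, $N$ is not explosive.
   Context: The state space of $N$ is $\mathcal N=\{n:\mathbb Z_{\ge0}\to\mathbb Z_{\ge0}\text{ with finite support}\}$, where $n_x$ is the number of compartments containing exactly $x$ molecules of $S$; $e_x$ is the indicator of $x$. The fragmentation kernel $\psi:\mathbb Z_{\ge0}^2\to[0,1]$ satisfies $\psi(x,y)=0$ for $y>x$ and $y\mapsto\psi(x,y)$ is a probability measure for each $x$. $N$ is the continuous-time Markov chain on $\mathcal N$ with generator $\mathcal LV(n)=\sum_{x=0}^\infty\Big[\kappa_bn_x\big(V(n-e_x+e_{x+1})-V(n)\big)+\kappa_dn_xx\big(V(n-e_x+e_{x-1})-V(n)\big)+\kappa_I\mu(x)\big(V(n+e_x)-V(n)\big)+\kappa_En_x\big(V(n-e_x)-V(n)\big)+\kappa_Fxn_x\sum_{y=0}^\infty\psi(x,y)\big(V(n-e_x+e_y+e_{x-y})-V(n)\big)+\kappa_C\binom{n_x}2\big(V(n-2e_x+e_{2x})-V(n)\big)+\sum_{y\ne x}\kappa_C\frac{n_xn_y}2\big(V(n-e_x-e_y+e_{x+y})-V(n)\big)\Big]$. (Each compartment independently gains an $S$ at rate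 $\kappa_b$ and loses each $S$ at rate $\kappa_d$; new compartments arrive at rate $\kappa_I$ with content distributed as $\mu$; each compartment exits at rate $\kappa_E$; a compartment with $x$ molecules fragments at rate $\kappa_Fx$ into daughters with $y$ and $x-y$ molecules, $y\sim\psi(x,\cdot)$; each pair of compartments coagulates at rate $\kappa_C$.) A continuous-time Markov chain is explosive if from some initial state it makes infinitely many jumps in finite time with positive probability, and non-explosive otherwise. *)

theory Defs
  imports "HOL-Probability.Probability"
begin

text \<open>A chain on state type 's is specified by a countable family of events of type 'e:
  event e fires in state s at rate r e s \<ge> 0 and moves the chain to tgt e s.
  The generator is  L V s = sum_e r e s (V (tgt e s) - V s).  Terms with tgt e s = s
  contribute nothing to the generator and are discarded.\<close>

definition trans_rate :: "('e \<Rightarrow> 's \<Rightarrow> real) \<Rightarrow> ('e \<Rightarrow> 's \<Rightarrow> 's) \<Rightarrow> 's \<Rightarrow> 's \<Rightarrow> real" where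
  "trans_rate r tgt s s' = (if s' = s then 0 else infsum (\<lambda>e. r e s) {e. tgt e s = s'})"

definition total_rate :: "('e \<Rightarrow> 's \<Rightarrow> real) \<Rightarrow> ('e \<Rightarrow> 's \<Rightarrow> 's) \<Rightarrow> 's \<Rightarrow> real" where
  "total_rate r tgt s = infsum (\<lambda>e. r e s) {e. tgt e s \<noteq> s}"

definition jump_prob :: "('e \<Rightarrow> 's \<Rightarrow> real) \<Rightarrow> ('e \<Rightarrow> 's \<Rightarrow> 's) \<Rightarrow> 's \<Rightarrow> 's \<Rightarrow> real" where
  "jump_prob r tgt s s' =
     (if total_rate r tgt s = 0 then (if s' = s then 1 else 0)
      else trans_rate r tgt s s' / total_rate r tgt s)"

text \<open>Jump chain / holding time construction (Norris, Sec. 2.6): Y is the jump chain started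
  at s0, E is an i.i.d. sequence of Exp(1) variables independent of Y; the k-th holding time is
  E k / q(Y k) (infinite if q(Y k) = 0).\<close>
definition ctmc_realization ::
  "('e \<Rightarrow> 's \<Rightarrow> real) \<Rightarrow> ('e \<Rightarrow> 's \<Rightarrow> 's) \<Rightarrow> 's \<Rightarrow> 'w measure \<Rightarrow>
   (nat \<Rightarrow> 'w \<Rightarrow> 's) \<Rightarrow> (nat \<Rightarrow> 'w \<Rightarrow> real) \<Rightarrow> bool" where
  "ctmc_realization r tgt s0 M Y E \<longleftrightarrow>
     prob_space M \<and>
     (\<forall>k. Y k \<in> measurable M (count_space UNIV)) \<and>
     (\<forall>k. E k \<in> borel_measurable M) \<and>
     (\<forall>k xs. measure M {\<omega> \<in> space M. \<forall>i\<le>k. Y i \<omega> = xs i} =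
        (if xs 0 = s0 then (\<Prod>i<k. jump_prob r tgt (xs i) (xs (Suc i))) else 0)) \<and>
     (\<forall>k xs t. (\<forall>i\<le>k. 0 \<le> t i) \<longrightarrow>
        measure M {\<omega> \<in> space M. \<forall>i\<le>k. Y i \<omega> = xs i \<and> E i \<omega> > t i} =
        measure M {\<omega> \<in> space M. \<forall>i\<le>k. Y i \<omega> = xs i} * (\<Prod>i\<le>k. exp (- t i)))"

definition explosion_time ::
  "('e \<Rightarrow> 's \<Rightarrow> real) \<Rightarrow> ('e \<Rightarrow> 's \<Rightarrow> 's) \<Rightarrow> (nat \<Rightarrow> 'w \<Rightarrow> 's) \<Rightarrow> (nat \<Rightarrow> 'w \<Rightarrow> real) \<Rightarrow> 'w \<Rightarrow> ennreal" where
  "explosion_time r tgt Y E \<omega> =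
     (\<Sum>k. if total_rate r tgt (Y k \<omega>) = 0 then \<infinity>
           else ennreal (E k \<omega> / total_rate r tgt (Y k \<omega>)))"

text \<open>The probability
  space is quantified over at the type 'w of the statement.\<close>
definition non_explosive ::
  "('e \<Rightarrow> 's \<Rightarrow> real) \<Rightarrow> ('e \<Rightarrow> 's \<Rightarrow> 's) \<Rightarrow> 's set \<Rightarrow> 'w itself \<Rightarrow> bool" where
  "non_explosive r tgt S (_ :: 'w itself) \<longleftrightarrow>
     (\<forall>s0\<in>S. \<forall>(M :: 'w measure) Y E. ctmc_realization r tgt s0 M Y E \<longrightarrow>
        (AE \<omega> in M. explosion_time r tgt Y E \<omega> = \<infinity>))"

text \<open>State space: finitely supported n : nat -> nat (n x = number of compartments with x molecules).\<close>
definition fin_states :: "(nat \<Rightarrow> nat) set" where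
  "fin_states = {n. finite {x. n x \<noteq> 0}}"

definition add1 :: "(nat \<Rightarrow> nat) \<Rightarrow> nat \<Rightarrow> (nat \<Rightarrow> nat)" where
  "add1 n x = n(x := Suc (n x))"

definition del1 :: "(nat \<Rightarrow> nat) \<Rightarrow> nat \<Rightarrow> (nat \<Rightarrow> nat)" where
  "del1 n x = n(x := n x - 1)"     \<comment> \<open>n - e_x (only used where n x \<ge> 1 or the rate is 0)\<close>

datatype cevent = Birth nat | Death nat | Inflow nat | Exit nat | Frag nat nat | Coag nat nat

definition comp_rate ::
  "real \<Rightarrow> real \<Rightarrow> real \<Rightarrow> real \<Rightarrow> real \<Rightarrow> real \<Rightarrow> nat pmf \<Rightarrow> (nat \<Rightarrow> nat pmf) \<Rightarrow>
   cevent \<Rightarrow> (nat \<Rightarrow> nat) \<Rightarrow> real" where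
  "comp_rate kb kd kI kE kF kC mu psi c n =
     (case c of
        Birth x \<Rightarrow> kb * real (n x)
      | Death x \<Rightarrow> kd * real (n x) * real x
      | Inflow x \<Rightarrow> kI * pmf mu x
      | Exit x \<Rightarrow> kE * real (n x)
      | Frag x y \<Rightarrow> kF * real x * real (n x) * pmf (psi x) y
      | Coag x y \<Rightarrow> (if x = y then kC * real (n x choose 2)
                     else kC * real (n x) * real (n y) / 2))"

definition comp_tgt :: "cevent \<Rightarrow> (nat \<Rightarrow> nat) \<Rightarrow> (nat \<Rightarrow> nat)" where
  "comp_tgt c n =
     (case c of
        Birth x \<Rightarrow> add1 (del1 n x) (x + 1)
      | Death x \<Rightarrow> add1 (del1 n x) (x - 1)
      | Inflow x \<Rightarrow> add1 n x
      | Exit x \<Rightarrow> del1 n x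
      | Frag x y \<Rightarrow> add1 (add1 (del1 n x) y) (x - y)
      | Coag x y \<Rightarrow> add1 (del1 (del1 n x) y) (x + y))"

end

theory Submission
  imports Defs
begin

text \<open>
  Realise the chain by its jump chain \<open>Y\<close> and i.i.d. \<open>Exp(1)\<close> clocks \<open>E\<close>, the \<open>k\<close>-th holding
  time being \<open>E k / q (Y k)\<close>. Discount the \<open>k\<close>-th holding period by \<open>exp (- lam / q (Y k))\<close> if
  \<open>E k > 1\<close> and by \<open>1\<close> otherwise. On explosion the total time \<open>T\<close> is finite and every partial
  product \<open>Z K\<close> of these discounts stays above \<open>exp (- lam * T)\<close>. On the other hand the expectation
  of \<open>Z K\<close> is a sum over jump-chain paths of products of the one-step means
  \<open>phi s = exp (-1) * exp (- lam / q s) + (1 - exp (-1))\<close>. If some \<open>V \<ge> 0\<close> with \<open>V s0 < \<epsilon>\<close>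
  satisfies \<open>phi \<le> \<rho> < 1\<close> and \<open>phi * P V \<le> V\<close> on \<open>{V < 1}\<close>, where \<open>P\<close> is the transition
  operator of the jump chain, then this expectation is at most \<open>\<rho>^K + \<epsilon>\<close>, by induction on \<open>K\<close>
  applied to \<open>min 1 (\<rho>^j + V)\<close>. So explosion has probability zero.

  For the compartment model take \<open>V = min 1 ((size + 1) / L + \<delta>)\<close>, where the size counts
  compartments plus molecules. Only births and fragmentations (by one) and inflows (by \<open>x + 1\<close>)
  increase the size, so the drift of \<open>V\<close> is at most \<open>(kb + kF) (size + 1) / L\<close> plus
  \<open>kI * E_mu (min 1 ((x + 1) / L))\<close>, and the latter tends to \<open>0\<close> by dominated convergence
  whatever the tail of \<open>mu\<close>. On \<open>{V < 1}\<close> the size is below \<open>L\<close>, which bounds the total rate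
  and yields \<open>\<rho> < 1\<close>, and for \<open>lam = 2 e max 1 (kb + kF)\<close> the discount absorbs the drift.
\<close>

lemma nn_integral_count_space_subset:
  fixes f :: "'a \<Rightarrow> ennreal"
  assumes "A \<subseteq> B"
  shows "(\<integral>\<^sup>+x. f x \<partial>count_space A) \<le> (\<integral>\<^sup>+x. f x \<partial>count_space B)"
  using assms
  by (auto simp: nn_integral_count_space_indicator intro!: nn_integral_mono split: split_indicator)

lemma nn_integral_count_space_Times:
  fixes h :: "'a \<times> 'b \<Rightarrow> ennreal"
  shows "(\<integral>\<^sup>+p. h p \<partial>count_space (A \<times> B)) =
    (\<integral>\<^sup>+a. \<integral>\<^sup>+b. h (a, b) \<partial>count_space B \<partial>count_space A)"
proof -
  have "(\<integral>\<^sup>+p. h p \<partial>count_space (A \<times> B)) =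
      (\<integral>\<^sup>+p. h p * indicator (A \<times> B) p \<partial>count_space UNIV)"
    by (simp add: nn_integral_count_space_indicator)
  also have "\<dots> = (\<integral>\<^sup>+a. \<integral>\<^sup>+b. h (a, b) * indicator (A \<times> B) (a, b)
      \<partial>count_space UNIV \<partial>count_space UNIV)"
    by (rule nn_integral_fst_count_space[symmetric])
  also have "\<dots> = (\<integral>\<^sup>+a. (\<integral>\<^sup>+b. h (a, b) * indicator B b \<partial>count_space UNIV) * indicator A a
      \<partial>count_space UNIV)"
    by (intro nn_integral_cong) (auto simp: indicator_def)
  finally show ?thesis
    by (simp add: nn_integral_count_space_indicator)
qed

lemma nn_integral_range_inj:
  fixes f :: "'b \<Rightarrow> ennreal"
  assumes "inj h"
  shows "(\<integral>\<^sup>+x. f (h x) \<partial>count_space UNIV) = (\<integral>\<^sup>+e. f e * indicator (range h) e \<partial>count_space UNIV)"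
proof -
  have "(\<integral>\<^sup>+x. f (h x) \<partial>count_space UNIV) = (\<integral>\<^sup>+e. f e \<partial>count_space (range h))"
    by (rule nn_integral_bij_count_space) (use assms in \<open>simp add: inj_on_imp_bij_betw\<close>)
  then show ?thesis by (simp add: nn_integral_count_space_indicator)
qed

lemma ennreal_infsum_nonneg:
  fixes f :: "'a \<Rightarrow> real"
  assumes nonneg: "\<And>x. x \<in> A \<Longrightarrow> 0 \<le> f x"
    and finite: "(\<integral>\<^sup>+x. ennreal (f x) \<partial>count_space A) < \<infinity>"
  shows "ennreal (infsum f A) = (\<integral>\<^sup>+x. ennreal (f x) \<partial>count_space A)"
proof -
  have "integrable (count_space A) f"
    by (rule integrableI_nonneg) (use nonneg finite in \<open>auto simp: AE_count_space\<close>)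
  then have abs: "Infinite_Set_Sum.abs_summable_on f A"
    by (simp add: abs_summable_on_def)
  have "(\<integral>\<^sup>+x. ennreal (f x) \<partial>count_space A) = ennreal (infsetsum f A)"
    by (rule nn_integral_conv_infsetsum) (use abs nonneg in auto)
  then show ?thesis
    by (simp add: infsetsum_infsum[OF abs])
qed

section \<open>Jump chains of rate systems\<close>

locale rate_system =
  fixes r :: "'e \<Rightarrow> 's \<Rightarrow> real" and tgt :: "'e \<Rightarrow> 's \<Rightarrow> 's" and R :: "'s set"
  assumes countable_states: "countable R"
    and tgt_closed: "\<And>s e. s \<in> R \<Longrightarrow> tgt e s \<in> R"
    and rate_nonneg: "\<And>e s. s \<in> R \<Longrightarrow> 0 \<le> r e s"
    and rate_summable: "\<And>s. s \<in> R \<Longrightarrow> (\<integral>\<^sup>+e. ennreal (r e s) \<partial>count_space UNIV) < \<infinity>"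
begin

lemma ennreal_infsum_rate:
  assumes "s \<in> R"
  shows "ennreal (infsum (\<lambda>e. r e s) A) = (\<integral>\<^sup>+e. ennreal (r e s) \<partial>count_space A)"
proof (rule ennreal_infsum_nonneg)
  show "(\<integral>\<^sup>+e. ennreal (r e s) \<partial>count_space A) < \<infinity>"
    using nn_integral_count_space_subset[of A UNIV] rate_summable[OF assms] le_less_trans by blast
qed (use assms rate_nonneg in auto)

lemma ennreal_total_rate:
  "s \<in> R \<Longrightarrow> ennreal (total_rate r tgt s) = (\<integral>\<^sup>+e. ennreal (r e s) \<partial>count_space {e. tgt e s \<noteq> s})"
  unfolding total_rate_def by (rule ennreal_infsum_rate)

lemma total_rate_nonneg: "s \<in> R \<Longrightarrow> 0 \<le> total_rate r tgt s"
  unfolding total_rate_def by (rule infsum_nonneg) (auto intro: rate_nonneg)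

lemma ennreal_trans_rate:
  "s \<in> R \<Longrightarrow> s' \<noteq> s \<Longrightarrow>
    ennreal (trans_rate r tgt s s') = (\<integral>\<^sup>+e. ennreal (r e s) \<partial>count_space {e. tgt e s = s'})"
  unfolding trans_rate_def by (simp add: ennreal_infsum_rate)

lemma trans_rate_nonneg: "s \<in> R \<Longrightarrow> 0 \<le> trans_rate r tgt s s'"
  unfolding trans_rate_def by (auto intro!: infsum_nonneg rate_nonneg)

lemma jump_prob_nonneg: "s \<in> R \<Longrightarrow> 0 \<le> jump_prob r tgt s s'"
  unfolding jump_prob_def using trans_rate_nonneg total_rate_nonneg by auto

definition jump_op :: "('s \<Rightarrow> ennreal) \<Rightarrow> 's \<Rightarrow> ennreal" where
  "jump_op g s = (\<integral>\<^sup>+s'. ennreal (jump_prob r tgt s s') * g s' \<partial>count_space R)"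

lemma jump_op_eq_rate_integral:
  assumes s: "s \<in> R" and q: "total_rate r tgt s > 0"
  shows "jump_op g s = ennreal (1 / total_rate r tgt s) *
    (\<integral>\<^sup>+e. ennreal (r e s) * g (tgt e s) \<partial>count_space {e. tgt e s \<noteq> s})"
proof -
  define q where "q = total_rate r tgt s"
  define F where "F s' e = (if tgt e s = s' \<and> s' \<noteq> s then ennreal (r e s) * g (tgt e s) else 0)"
    for s' e
  have pointwise: "ennreal (jump_prob r tgt s s') * g s' =
      ennreal (1 / q) * (\<integral>\<^sup>+e. F s' e \<partial>count_space UNIV)" for s'
  proof (cases "s' = s")
    case True
    then show ?thesis using q by (simp add: jump_prob_def trans_rate_def F_def q_def)
  next
    case False
    have jump: "ennreal (jump_prob r tgt s s') = ennreal (1 / q) * ennreal (trans_rate r tgt s s')"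
      using q trans_rate_nonneg[OF s, of s'] unfolding jump_prob_def q_def
      by (simp add: ennreal_mult'' divide_inverse mult.commute)
    have "ennreal (trans_rate r tgt s s') * g s' =
        (\<integral>\<^sup>+e. ennreal (r e s) * g s' \<partial>count_space {e. tgt e s = s'})"
      by (simp add: ennreal_trans_rate[OF s False] nn_integral_multc)
    also have "\<dots> = (\<integral>\<^sup>+e. F s' e \<partial>count_space UNIV)"
      by (auto simp: nn_integral_count_space_indicator F_def False indicator_def
          intro!: nn_integral_cong)
    finally show ?thesis by (simp add: jump mult.assoc)
  qed
  have "jump_op g s = ennreal (1 / q) *
      (\<integral>\<^sup>+s'. (\<integral>\<^sup>+e. F s' e \<partial>count_space UNIV) \<partial>count_space R)"
    unfolding jump_op_def pointwise by (rule nn_integral_cmult) simp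
  also have "(\<integral>\<^sup>+s'. (\<integral>\<^sup>+e. F s' e \<partial>count_space UNIV) \<partial>count_space R) =
      (\<integral>\<^sup>+e. (\<integral>\<^sup>+s'. F s' e \<partial>count_space R) \<partial>count_space UNIV)"
    by (rule nn_integral_count_space_nn_integral[symmetric]) (auto simp: countable_states)
  also have "\<dots> = (\<integral>\<^sup>+e. ennreal (r e s) * g (tgt e s) * indicator {e. tgt e s \<noteq> s} e
      \<partial>count_space UNIV)"
    by (intro nn_integral_cong, subst nn_integral_count_space'[where A="{tgt e s}" for e])
      (auto simp: F_def tgt_closed s indicator_def)
  finally show ?thesis
    by (simp add: q_def nn_integral_count_space_indicator)
qed

lemma jump_op_one:
  assumes s: "s \<in> R"
  shows "jump_op (\<lambda>_. 1) s = 1"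
proof (cases "total_rate r tgt s = 0")
  case True
  then show ?thesis
    unfolding jump_op_def
    by (subst nn_integral_count_space'[where A="{s}"]) (auto simp: jump_prob_def s)
next
  case False
  then have q: "total_rate r tgt s > 0" using total_rate_nonneg[OF s] by simp
  then show ?thesis
    by (simp add: jump_op_eq_rate_integral[OF s q] flip: ennreal_total_rate[OF s] ennreal_mult)
qed

lemma jump_op_mono: "(\<And>s'. s' \<in> R \<Longrightarrow> g s' \<le> h s') \<Longrightarrow> jump_op g s \<le> jump_op h s"
  unfolding jump_op_def by (intro nn_integral_mono mult_left_mono) auto

definition paths :: "nat \<Rightarrow> (nat \<Rightarrow> 's) set" where
  "paths K = {..K} \<rightarrow>\<^sub>E R"

definition path_prob :: "'s \<Rightarrow> nat \<Rightarrow> (nat \<Rightarrow> 's) \<Rightarrow> real" where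
  "path_prob s0 K xs = (if xs 0 = s0 then (\<Prod>i<K. jump_prob r tgt (xs i) (xs (Suc i))) else 0)"

definition path_sum :: "'s \<Rightarrow> ('s \<Rightarrow> real) \<Rightarrow> nat \<Rightarrow> ('s \<Rightarrow> ennreal) \<Rightarrow> ennreal" where
  "path_sum s0 \<phi> K g =
    (\<integral>\<^sup>+xs. ennreal (path_prob s0 K xs * (\<Prod>i<K. \<phi> (xs i))) * g (xs K) \<partial>count_space (paths K))"

lemma countable_paths: "countable (paths K)"
  unfolding paths_def by (rule countable_PiE) (auto simp: countable_states)

lemma paths_eqI: "xs \<in> paths K \<Longrightarrow> ys \<in> paths K \<Longrightarrow> (\<And>i. i \<le> K \<Longrightarrow> xs i = ys i) \<Longrightarrow> xs = ys"
  unfolding paths_def by (rule PiE_ext) auto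

lemma bij_betw_paths_Suc:
  "bij_betw (\<lambda>(xs, y). xs(Suc K := y)) (paths K \<times> R) (paths (Suc K))"
proof (rule bij_betw_byWitness[where f'="\<lambda>xs. (xs(Suc K := undefined), xs (Suc K))"])
  show "\<forall>p\<in>paths K \<times> R. (\<lambda>xs. (xs(Suc K := undefined), xs (Suc K))) ((\<lambda>(xs, y). xs(Suc K := y)) p) = p"
  proof safe
    fix xs y assume "xs \<in> paths K"
    then have "xs (Suc K) = undefined" unfolding paths_def by (rule PiE_arb) simp
    then show "(xs(Suc K := y))(Suc K := undefined) = xs" "(xs(Suc K := y)) (Suc K) = y"
      by auto
  qed
  show "\<forall>xs\<in>paths (Suc K). (\<lambda>(xs, y). xs(Suc K := y)) (xs(Suc K := undefined), xs (Suc K)) = xs"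
    by simp
  show "(\<lambda>(xs, y). xs(Suc K := y)) ` (paths K \<times> R) \<subseteq> paths (Suc K)"
    by (auto simp: paths_def atMost_Suc intro!: PiE_fun_upd)
  show "(\<lambda>xs. (xs(Suc K := undefined), xs (Suc K))) ` paths (Suc K) \<subseteq> paths K \<times> R"
  proof safe
    fix xs assume xs: "xs \<in> paths (Suc K)"
    then show "xs(Suc K := undefined) \<in> paths K"
      unfolding paths_def atMost_Suc by (intro fun_upd_in_PiE) auto
    show "xs (Suc K) \<in> R" using xs unfolding paths_def by auto
  qed
qed

lemma path_prob_nonneg: "xs \<in> paths K \<Longrightarrow> 0 \<le> path_prob s0 K xs"
  unfolding path_prob_def paths_def by (auto intro!: prod_nonneg jump_prob_nonneg)

lemma path_prob_Suc:
  "path_prob s0 (Suc K) (xs(Suc K := y)) = path_prob s0 K xs * jump_prob r tgt (xs K) y"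
proof -
  have "(\<Prod>i<K. jump_prob r tgt ((xs(Suc K := y)) i) ((xs(Suc K := y)) (Suc i))) =
      (\<Prod>i<K. jump_prob r tgt (xs i) (xs (Suc i)))"
    by (rule prod.cong) auto
  then show ?thesis unfolding path_prob_def by (simp add: prod.lessThan_Suc)
qed

lemma path_sum_0:
  assumes "s0 \<in> R"
  shows "path_sum s0 \<phi> 0 g = g s0"
proof -
  define x0 :: "nat \<Rightarrow> 's" where "x0 = (\<lambda>_. undefined)(0 := s0)"
  have x0: "x0 \<in> paths 0" unfolding paths_def x0_def by (rule PiE_I) (use assms in auto)
  have "path_sum s0 \<phi> 0 g = (\<integral>\<^sup>+xs. ennreal (path_prob s0 0 xs) * g (xs 0) \<partial>count_space (paths 0))"
    by (simp add: path_sum_def)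
  also have "\<dots> = (\<Sum>xs\<in>{x0}. ennreal (path_prob s0 0 xs) * g (xs 0))"
  proof (rule nn_integral_count_space')
    show "ennreal (path_prob s0 0 xs) * g (xs 0) = 0" if "xs \<in> paths 0" "xs \<notin> {x0}" for xs
      using that x0 paths_eqI[OF that(1) x0] by (auto simp: path_prob_def x0_def)
  qed (use x0 in auto)
  finally show ?thesis by (simp add: path_prob_def x0_def)
qed

lemma path_sum_Suc:
  assumes \<phi>_nonneg: "\<And>s. s \<in> R \<Longrightarrow> 0 \<le> \<phi> s"
  shows "path_sum s0 \<phi> (Suc K) g = path_sum s0 \<phi> K (\<lambda>s. ennreal (\<phi> s) * jump_op g s)"
proof -
  define F where "F xs = ennreal (path_prob s0 (Suc K) xs * (\<Prod>i<Suc K. \<phi> (xs i))) * g (xs (Suc K))"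
    for xs
  have step: "(\<integral>\<^sup>+y. F (xs(Suc K := y)) \<partial>count_space R) =
      ennreal (path_prob s0 K xs * (\<Prod>i<K. \<phi> (xs i))) * (ennreal (\<phi> (xs K)) * jump_op g (xs K))"
    if xs: "xs \<in> paths K" for xs
  proof -
    have R: "xs i \<in> R" if "i \<le> K" for i using xs that unfolding paths_def by auto
    have nonneg: "0 \<le> path_prob s0 K xs * (\<Prod>i<K. \<phi> (xs i))"
      by (auto intro!: mult_nonneg_nonneg prod_nonneg path_prob_nonneg[OF xs] \<phi>_nonneg R)
    have "F (xs(Suc K := y)) = ennreal (path_prob s0 K xs * (\<Prod>i<K. \<phi> (xs i))) *
        (ennreal (\<phi> (xs K)) * (ennreal (jump_prob r tgt (xs K) y) * g y))" for y
      using nonneg \<phi>_nonneg[OF R[of K]] jump_prob_nonneg[OF R[of K], of y]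
      by (simp add: F_def path_prob_Suc prod.lessThan_Suc ennreal_mult' mult_ac)
    then show ?thesis by (simp add: nn_integral_cmult jump_op_def)
  qed
  have "path_sum s0 \<phi> (Suc K) g = (\<integral>\<^sup>+p. F ((\<lambda>(xs, y). xs(Suc K := y)) p) \<partial>count_space (paths K \<times> R))"
    unfolding path_sum_def F_def[symmetric]
    by (rule nn_integral_bij_count_space[OF bij_betw_paths_Suc, symmetric])
  also have "\<dots> = (\<integral>\<^sup>+xs. \<integral>\<^sup>+y. F (xs(Suc K := y)) \<partial>count_space R \<partial>count_space (paths K))"
    by (simp add: nn_integral_count_space_Times)
  also have "\<dots> = path_sum s0 \<phi> K (\<lambda>s. ennreal (\<phi> s) * jump_op g s)"
    unfolding path_sum_def by (intro nn_integral_cong) (simp add: step)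
  finally show ?thesis .
qed

lemma path_sum_mono:
  "(\<And>s. s \<in> R \<Longrightarrow> g s \<le> h s) \<Longrightarrow> path_sum s0 \<phi> K g \<le> path_sum s0 \<phi> K h"
  unfolding path_sum_def by (intro nn_integral_mono mult_left_mono) (auto simp: paths_def)

lemma path_sum_cong:
  "(\<And>s. s \<in> R \<Longrightarrow> g s = h s) \<Longrightarrow> path_sum s0 \<phi> K g = path_sum s0 \<phi> K h"
  by (intro antisym path_sum_mono) auto

lemma path_sum_one: "s0 \<in> R \<Longrightarrow> path_sum s0 (\<lambda>_. 1) K (\<lambda>_. 1) = 1"
proof (induction K)
  case (Suc K)
  then show ?case
    by (simp add: path_sum_Suc jump_op_one cong: path_sum_cong)
qed (simp add: path_sum_0)

lemma path_sum_le_iterate: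
  assumes "s0 \<in> R" and "\<And>s. s \<in> R \<Longrightarrow> 0 \<le> \<phi> s"
    and "\<And>j s. s \<in> R \<Longrightarrow> ennreal (\<phi> s) * jump_op (G j) s \<le> G (Suc j) s"
  shows "path_sum s0 \<phi> K (G j) \<le> G (j + K) s0"
proof (induction K arbitrary: j)
  case 0
  then show ?case using path_sum_0[OF assms(1)] by simp
next
  case (Suc K)
  have "path_sum s0 \<phi> (Suc K) (G j) = path_sum s0 \<phi> K (\<lambda>s. ennreal (\<phi> s) * jump_op (G j) s)"
    by (rule path_sum_Suc[OF assms(2)])
  also have "\<dots> \<le> path_sum s0 \<phi> K (G (Suc j))"
    by (intro path_sum_mono assms(3))
  also have "\<dots> \<le> G (Suc j + K) s0" by (rule Suc.IH)
  finally show ?case by simp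
qed

lemma jump_op_add_const:
  assumes "s \<in> R"
  shows "jump_op (\<lambda>s'. c + g s') s = c + jump_op g s"
proof -
  have "jump_op (\<lambda>s'. c + g s') s =
      (\<integral>\<^sup>+s'. c * ennreal (jump_prob r tgt s s') + ennreal (jump_prob r tgt s s') * g s' \<partial>count_space R)"
    unfolding jump_op_def by (intro nn_integral_cong) (simp add: algebra_simps)
  also have "\<dots> = c * jump_op (\<lambda>_. 1) s + jump_op g s"
    unfolding jump_op_def by (simp add: nn_integral_add nn_integral_cmult)
  finally show ?thesis by (simp add: jump_op_one[OF assms])
qed

lemma jump_op_truncated_step:
  assumes s: "s \<in> R" and \<rho>: "0 \<le> \<rho>" and \<phi>: "0 \<le> \<phi> s" "\<phi> s \<le> 1"
    and V_nonneg: "\<And>s. s \<in> R \<Longrightarrow> 0 \<le> V s"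
    and contract: "V s < 1 \<Longrightarrow> \<phi> s \<le> \<rho>"
    and super: "V s < 1 \<Longrightarrow> ennreal (\<phi> s) * jump_op (\<lambda>s'. ennreal (V s')) s \<le> ennreal (V s)"
  shows "ennreal (\<phi> s) * jump_op (\<lambda>s'. ennreal (min 1 (\<rho> ^ j + V s'))) s \<le>
    ennreal (min 1 (\<rho> ^ Suc j + V s))"
proof -
  let ?G = "\<lambda>j s'. ennreal (min 1 (\<rho> ^ j + V s'))"
  have "jump_op (?G j) s \<le> jump_op (\<lambda>_. 1) s"
    by (intro jump_op_mono) simp
  then have "ennreal (\<phi> s) * jump_op (?G j) s \<le> ennreal 1 * 1"
    using \<phi> by (intro mult_mono) (auto simp: jump_op_one[OF s])
  moreover have "ennreal (\<phi> s) * jump_op (?G j) s \<le> ennreal (\<rho> ^ Suc j + V s)" if "V s < 1"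
  proof -
    have "jump_op (?G j) s \<le> jump_op (\<lambda>s'. ennreal (\<rho> ^ j) + ennreal (V s')) s"
      using \<rho> V_nonneg by (intro jump_op_mono) (simp flip: ennreal_plus)
    then have "ennreal (\<phi> s) * jump_op (?G j) s \<le>
        ennreal (\<phi> s) * (ennreal (\<rho> ^ j) + jump_op (\<lambda>s'. ennreal (V s')) s)"
      by (simp add: jump_op_add_const[OF s] mult_left_mono)
    also have "\<dots> = ennreal (\<phi> s * \<rho> ^ j) + ennreal (\<phi> s) * jump_op (\<lambda>s'. ennreal (V s')) s"
      using \<rho> \<phi> by (simp add: distrib_left ennreal_mult)
    also have "\<dots> \<le> ennreal (\<rho> ^ Suc j) + ennreal (V s)"
      using contract[OF that] \<rho> by (intro add_mono super[OF that] ennreal_leI) (simp add: mult_right_mono)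
    finally show ?thesis
      using \<rho> V_nonneg[OF s] by (simp add: ennreal_plus)
  qed
  moreover have "0 \<le> \<rho> ^ Suc j" using \<rho> by simp
  ultimately show ?thesis
    by (cases "V s < 1") (auto simp: min_def)
qed

lemma path_sum_le_lyapunov:
  assumes s0: "s0 \<in> R" and \<rho>: "0 \<le> \<rho>"
    and \<phi>: "\<And>s. s \<in> R \<Longrightarrow> 0 \<le> \<phi> s" "\<And>s. s \<in> R \<Longrightarrow> \<phi> s \<le> 1"
    and V_nonneg: "\<And>s. s \<in> R \<Longrightarrow> 0 \<le> V s"
    and contract: "\<And>s. s \<in> R \<Longrightarrow> V s < 1 \<Longrightarrow> \<phi> s \<le> \<rho>"
    and super: "\<And>s. s \<in> R \<Longrightarrow> V s < 1 \<Longrightarrow>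
      ennreal (\<phi> s) * jump_op (\<lambda>s'. ennreal (V s')) s \<le> ennreal (V s)"
  shows "path_sum s0 \<phi> K (\<lambda>_. 1) \<le> ennreal (\<rho> ^ K + V s0)"
proof -
  let ?G = "\<lambda>j s. ennreal (min 1 (\<rho> ^ j + V s))"
  have "path_sum s0 \<phi> K (\<lambda>_. 1) = path_sum s0 \<phi> K (?G 0)"
    using V_nonneg by (intro path_sum_cong) simp
  also have "\<dots> \<le> ?G (0 + K) s0"
    using assms by (intro path_sum_le_iterate jump_op_truncated_step) auto
  also have "\<dots> \<le> ennreal (\<rho> ^ K + V s0)"
    by (intro ennreal_leI) simp
  finally show ?thesis .
qed

end

section \<open>Discounted holding times\<close>

text \<open>A holding period is long when its \<open>Exp(1)\<close> clock exceeds \<open>1\<close>, an event of probability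
  \<open>exp (-1)\<close>; hence the weights in \<open>mean_discount\<close>.\<close>

definition discount :: "real \<Rightarrow> real \<Rightarrow> bool \<Rightarrow> real" where
  "discount lam q long = (if q = 0 then 0 else if long then exp (- lam / q) else 1)"

definition mean_discount :: "real \<Rightarrow> real \<Rightarrow> real" where
  "mean_discount lam q = exp (-1) * discount lam q True + (1 - exp (-1)) * discount lam q False"

lemma discount_nonneg: "0 \<le> discount lam q long"
  by (simp add: discount_def)

lemma mean_discount_eq:
  "q \<noteq> 0 \<Longrightarrow> mean_discount lam q = exp (-1) * exp (- lam / q) + (1 - exp (-1))"
  by (simp add: mean_discount_def discount_def)

lemma mean_discount_zero [simp]: "mean_discount lam 0 = 0"
  by (simp add: mean_discount_def discount_def)

lemma mean_discount_nonneg: "0 \<le> mean_discount lam q"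
  by (simp add: mean_discount_def discount_nonneg)

lemma mean_discount_le_one:
  assumes "0 \<le> lam" "0 \<le> q"
  shows "mean_discount lam q \<le> 1"
proof (cases "q = 0")
  case False
  have "exp (- lam / q) \<le> 1" using assms by simp
  then show ?thesis using mult_left_le[of "exp (- lam / q)" "exp (-1)"]
    by (simp add: mean_discount_eq[OF False])
qed simp

lemma mean_discount_mono:
  assumes "0 \<le> lam" "0 < q" "q \<le> q'"
  shows "mean_discount lam q \<le> mean_discount lam q'"
proof -
  have "lam / q' \<le> lam / q" using assms by (intro divide_left_mono) auto
  then show ?thesis using assms by (simp add: mean_discount_eq)
qed

lemma mean_discount_less_one: "0 < lam \<Longrightarrow> 0 < q \<Longrightarrow> mean_discount lam q < 1"
  by (simp add: mean_discount_eq)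

lemma exp_minus_le_one_minus_half: "0 \<le> x \<Longrightarrow> x \<le> 1 \<Longrightarrow> exp (- x) \<le> 1 - x / (2::real)"
proof -
  assume x: "0 \<le> x" "x \<le> 1"
  have "exp (- x) \<le> 1 / (1 + x)"
    using exp_ge_add_one_self[of x] x by (simp add: exp_minus field_simps)
  also have "1 / (1 + x) \<le> 1 - x / 2"
  proof -
    have "x * x \<le> x" using x mult_right_mono[of x 1 x] by simp
    then have "1 \<le> (1 - x / 2) * (1 + x)" by (simp add: field_simps)
    then show ?thesis using x by (simp add: divide_le_eq)
  qed
  finally show ?thesis .
qed

lemma mean_discount_le_fast:
  assumes c: "0 < c" and q: "2 * c / exp (-1) \<le> q"
  shows "mean_discount (2 * c / exp (-1)) q \<le> 1 - c / q"
proof -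
  define x where "x = 2 * c / exp (-1) / q"
  have "0 < 2 * c / exp (-1)" using c by simp
  then have q_pos: "0 < q" using q by linarith
  have x: "0 \<le> x" "x \<le> 1" using c q q_pos by (auto simp: x_def field_simps)
  have "mean_discount (2 * c / exp (-1)) q = exp (-1) * exp (- x) + (1 - exp (-1))"
    using q_pos by (simp add: mean_discount_eq x_def)
  also have "\<dots> \<le> exp (-1) * (1 - x / 2) + (1 - exp (-1))"
    using exp_minus_le_one_minus_half[OF x] by simp
  also have "\<dots> = 1 - c / q"
    using q_pos by (simp add: x_def field_simps)
  finally show ?thesis .
qed

lemma mean_discount_le_slow:
  assumes "0 < q" "q < lam"
  shows "mean_discount lam q \<le> 1 - exp (-1) * (1 - exp (-1))"
proof -
  have "exp (- lam / q) \<le> exp (-1)" using assms by (simp add: field_simps)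
  then show ?thesis using assms by (simp add: mean_discount_eq algebra_simps)
qed

text \<open>States with \<open>q \<ge> lam\<close> are contracted by \<open>1 - c / q\<close>, which absorbs a drift \<open>J \<le> c V\<close>;
  the others by the uniform factor \<open>1 - exp (-1) * (1 - exp (-1))\<close>, which absorbs \<open>J \<le> q \<epsilon>\<close>.\<close>

lemma mean_discount_contraction:
  fixes q V J c \<epsilon> :: real
  assumes q: "q > 0" and V: "0 \<le> V" and J: "0 \<le> J" "J \<le> c * V" "J \<le> q * \<epsilon>"
    and c: "c > 0" and \<epsilon>: "\<epsilon> \<le> exp (-1) * (1 - exp (-1)) * V"
  shows "mean_discount (2 * c / exp (-1)) q * (V + J / q) \<le> V"
proof -
  let ?lam = "2 * c / exp (-1)"
  have \<phi>: "0 \<le> mean_discount ?lam q" "mean_discount ?lam q \<le> 1"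
    using c q by (simp_all add: mean_discount_nonneg mean_discount_le_one)
  show ?thesis
  proof (cases "?lam \<le> q")
    case True
    have "exp (-1) \<le> (1::real)" by simp
    then have "exp (-1) \<le> (2::real)" by linarith
    then have "c \<le> ?lam" using c by (simp add: field_simps)
    then have "c / q \<le> 1" using True q by simp
    moreover have "J / q \<le> c * V / q" using J q by (simp add: divide_right_mono)
    ultimately have "mean_discount ?lam q * (V + J / q) \<le> (1 - c / q) * (V + c * V / q)"
      using mean_discount_le_fast[OF c True] \<phi> V J q c by (intro mult_mono) auto
    also have "\<dots> = V - V * (c / q) ^ 2" using q by (simp add: field_simps power2_eq_square)
    also have "\<dots> \<le> V" using V by simp
    finally show ?thesis .
  next
    case False
    have "q * \<epsilon> \<le> q * (exp (-1) * (1 - exp (-1)) * V)"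
      using \<epsilon> q by (intro mult_left_mono) simp_all
    then have "J \<le> q * (exp (-1) * (1 - exp (-1)) * V)" using J(3) by linarith
    then have J_small: "J / q \<le> exp (-1) * (1 - exp (-1)) * V"
      using q by (simp add: pos_divide_le_eq mult.commute)
    have "mean_discount ?lam q * (V + J / q) = mean_discount ?lam q * V + mean_discount ?lam q * (J / q)"
      by (simp add: distrib_left)
    also have "\<dots> \<le> (1 - exp (-1) * (1 - exp (-1))) * V + 1 * (J / q)"
      using mean_discount_le_slow[of q ?lam] False q \<phi> V J by (intro add_mono mult_right_mono) auto
    also have "\<dots> \<le> V" using J_small by (simp add: algebra_simps)
    finally show ?thesis .
  qed
qed

lemma exp_le_discount:
  assumes "lam > 0" "q \<noteq> 0"
  shows "exp (- lam * max 0 (e / q)) \<le> discount lam q (1 < e)"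
proof (cases "1 < e \<and> q > 0")
  case True
  then have "1 / q \<le> max 0 (e / q)"
    by (auto simp: divide_right_mono intro: max.coboundedI2)
  then have "- lam * max 0 (e / q) \<le> - lam / q"
    using assms by (simp add: divide_inverse mult_left_mono)
  then show ?thesis using True by (simp add: discount_def)
next
  case False
  then consider "q < 0" "1 < e" | "\<not> 1 < e" using assms by linarith
  then show ?thesis
  proof cases
    case 1
    then have "max 0 (e / q) = 0" by (simp add: divide_pos_neg less_imp_le)
    moreover have "0 \<le> - lam / q" using assms 1 by (simp add: divide_pos_neg less_imp_le)
    ultimately show ?thesis using 1 by (simp add: discount_def)
  next
    case 2
    then show ?thesis using assms by (simp add: discount_def)
  qed
qed

lemma exp_le_discount_product:
  fixes q e :: "nat \<Rightarrow> real"
  assumes lam: "lam > 0"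
    and finite_time: "(\<Sum>k. if q k = 0 then \<infinity> else ennreal (e k / q k)) < of_nat m"
  shows "exp (- lam * m) \<le> (\<Prod>k<K. discount lam (q k) (1 < e k))"
proof -
  define t where "t k = (if q k = 0 then \<infinity> else ennreal (e k / q k))" for k
  have partial_le: "(\<Sum>k<K. t k) < of_nat m" for K
    using sum_le_suminf[of t "{..<K}"] finite_time unfolding t_def by (auto intro: le_less_trans)
  have q: "q k \<noteq> 0" for k
    using partial_le[of "Suc k"] member_le_sum[of k "{..<Suc k}" t] by (auto simp: t_def top_unique)
  define x where "x k = max 0 (e k / q k)" for k
  have "ennreal (\<Sum>k<K. x k) = (\<Sum>k<K. t k)"
    by (simp add: x_def t_def q sum_ennreal[symmetric] ennreal_max_0)
  then have "(\<Sum>k<K. x k) \<le> m"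
    using partial_le[of K] by (metis ennreal_of_nat_eq_real_of_nat ennreal_le_iff less_imp_le
        of_nat_0_le_iff)
  then have "exp (- lam * m) \<le> exp (- lam * (\<Sum>k<K. x k))"
    using lam by simp
  also have "\<dots> = (\<Prod>k<K. exp (- lam * x k))"
    by (simp add: sum_distrib_left sum_negf exp_sum[symmetric])
  also have "\<dots> \<le> (\<Prod>k<K. discount lam (q k) (1 < e k))"
    unfolding x_def by (intro prod_mono conjI exp_le_discount lam q) simp
  finally show ?thesis .
qed

lemma null_sets_uniformly_bounded_below:
  fixes Z :: "nat \<Rightarrow> 'a \<Rightarrow> real"
  assumes [measurable]: "\<And>K. Z K \<in> borel_measurable M" and c: "c > 0"
    and small: "\<And>\<epsilon>. \<epsilon> > 0 \<Longrightarrow> \<exists>K. (\<integral>\<^sup>+\<omega>. ennreal (Z K \<omega>) \<partial>M) \<le> ennreal \<epsilon>"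
  shows "{\<omega> \<in> space M. \<forall>K. c \<le> Z K \<omega>} \<in> null_sets M"
proof -
  let ?N = "{\<omega> \<in> space M. \<forall>K. c \<le> Z K \<omega>}"
  have "emeasure M ?N \<le> 0 + ennreal \<epsilon>" if \<epsilon>: "\<epsilon> > 0" for \<epsilon>
  proof -
    obtain K where K: "(\<integral>\<^sup>+\<omega>. ennreal (Z K \<omega>) \<partial>M) \<le> ennreal (c * \<epsilon>)"
      using small[of "c * \<epsilon>"] c \<epsilon> by auto
    have "?N \<subseteq> {\<omega> \<in> space M. 1 \<le> ennreal (1 / c) * ennreal (Z K \<omega>)}"
    proof safe
      fix \<omega> assume "\<forall>K. c \<le> Z K \<omega>"
      then have Z: "c \<le> Z K \<omega>" by blast
      have "ennreal 1 \<le> ennreal (1 / c * Z K \<omega>)"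
        using Z c by (intro ennreal_leI) (simp add: field_simps)
      also have "\<dots> = ennreal (1 / c) * ennreal (Z K \<omega>)"
        using Z c by (intro ennreal_mult) auto
      finally show "1 \<le> ennreal (1 / c) * ennreal (Z K \<omega>)" by simp
    qed
    then have "emeasure M ?N \<le> emeasure M {\<omega> \<in> space M. 1 \<le> ennreal (1 / c) * ennreal (Z K \<omega>)}"
      by (rule emeasure_mono) measurable
    also have "\<dots> \<le> ennreal (1 / c) * (\<integral>\<^sup>+\<omega>. ennreal (Z K \<omega>) * indicator (space M) \<omega> \<partial>M)"
      by (rule nn_integral_Markov_inequality) auto
    also have "(\<integral>\<^sup>+\<omega>. ennreal (Z K \<omega>) * indicator (space M) \<omega> \<partial>M) = (\<integral>\<^sup>+\<omega>. ennreal (Z K \<omega>) \<partial>M)"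
      by (rule nn_integral_cong) simp
    also have "ennreal (1 / c) * \<dots> \<le> ennreal (1 / c) * ennreal (c * \<epsilon>)"
      by (rule mult_left_mono[OF K]) simp
    also have "\<dots> = ennreal \<epsilon>"
      using c \<epsilon> by (simp flip: ennreal_mult)
    finally show ?thesis by simp
  qed
  then have "emeasure M ?N = 0"
    using ennreal_le_epsilon[of 0 "emeasure M ?N"] by simp
  then show ?thesis by (simp add: null_sets_def)
qed

section \<open>A Lyapunov criterion for non-explosion\<close>

locale chain_realization = rate_system r tgt R
  for r :: "'e \<Rightarrow> 's \<Rightarrow> real" and tgt :: "'e \<Rightarrow> 's \<Rightarrow> 's" and R :: "'s set" +
  fixes s0 :: 's and M :: "'w measure" and Y :: "nat \<Rightarrow> 'w \<Rightarrow> 's" and E :: "nat \<Rightarrow> 'w \<Rightarrow> real"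
  assumes initial_state: "s0 \<in> R" and realization: "ctmc_realization r tgt s0 M Y E"
begin

sublocale prob_space M
  using realization by (simp add: ctmc_realization_def)

lemma measurable_Y [measurable]: "Y i \<in> M \<rightarrow>\<^sub>M count_space UNIV"
  using realization by (simp add: ctmc_realization_def)

lemma measurable_E [measurable]: "E i \<in> borel_measurable M"
  using realization by (simp add: ctmc_realization_def)

lemma measurable_clock_weight [measurable]:
  "(\<lambda>\<omega>. w (Y i \<omega>) (1 < E i \<omega>) :: real) \<in> borel_measurable M"
proof -
  have [measurable]: "(\<lambda>\<omega>. w (Y i \<omega>) b :: real) \<in> borel_measurable M" for b
    by (rule measurable_compose[OF measurable_Y]) simp
  have "(\<lambda>\<omega>. w (Y i \<omega>) (1 < E i \<omega>)) = (\<lambda>\<omega>. if 1 < E i \<omega> then w (Y i \<omega>) True else w (Y i \<omega>) False)"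
    by (auto simp: fun_eq_iff)
  then show ?thesis by simp
qed

lemma prob_path: "prob {\<omega> \<in> space M. \<forall>i\<le>k. Y i \<omega> = xs i} = path_prob s0 k xs"
  using realization by (simp add: ctmc_realization_def path_prob_def)

lemma prob_path_clocks:
  "(\<And>i. i \<le> k \<Longrightarrow> 0 \<le> t i) \<Longrightarrow>
    prob {\<omega> \<in> space M. \<forall>i\<le>k. Y i \<omega> = xs i \<and> E i \<omega> > t i} = path_prob s0 k xs * (\<Prod>i\<le>k. exp (- t i))"
  using realization by (simp add: ctmc_realization_def prob_path)

lemma prob_path_long_clocks:
  assumes "S \<subseteq> {..k}"
  shows "prob {\<omega> \<in> space M. (\<forall>i\<le>k. Y i \<omega> = xs i) \<and> (\<forall>i\<in>S. 1 < E i \<omega>)} =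
    path_prob s0 k xs * exp (-1) ^ card S"
proof -
  define A where "A = {\<omega> \<in> space M. \<forall>i\<le>k. Y i \<omega> = xs i}"
  define D where "D = {\<omega> \<in> space M. (\<forall>i\<le>k. Y i \<omega> = xs i) \<and> (\<forall>i\<in>S. 1 < E i \<omega>)}"
  \<comment> \<open>on the path the clocks are a.s. positive, so \<open>E i > 0\<close> may be imposed off \<open>S\<close> for free\<close>
  define t where "t i = (if i \<in> S then 1 else (0::real))" for i
  define F where "F t = {\<omega> \<in> space M. \<forall>i\<le>k. Y i \<omega> = xs i \<and> E i \<omega> > t i}" for t :: "nat \<Rightarrow> real"
  have finite: "finite S" using assms finite_subset by blast
  have [measurable]: "D \<in> sets M" "A \<in> sets M" "F t' \<in> sets M" for t'
    unfolding D_def A_def F_def using finite by measurable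
  have "prob (A - F (\<lambda>_. 0)) = prob A - prob (F (\<lambda>_. 0))"
    by (rule finite_measure_Diff) (auto simp: A_def F_def)
  then have "prob (A - F (\<lambda>_. 0)) = 0"
    using prob_path_clocks[of k "\<lambda>_. 0" xs] by (simp add: A_def F_def prob_path)
  moreover have "D - F t \<subseteq> A - F (\<lambda>_. 0)"
    unfolding D_def A_def F_def t_def by auto
  ultimately have "prob (D - F t) = 0"
    by (metis finite_measure_mono measure_nonneg order_antisym sets.Diff \<open>A \<in> sets M\<close> \<open>F (\<lambda>_. 0) \<in> sets M\<close>)
  moreover have "F t \<subseteq> D" unfolding F_def D_def t_def using assms by force
  ultimately have "prob D = prob (F t)"
    by (simp add: finite_measure_Diff)
  also have "\<dots> = path_prob s0 k xs * (\<Prod>i\<le>k. exp (- t i))"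
    unfolding F_def by (rule prob_path_clocks) (simp add: t_def)
  also have "(\<Prod>i\<le>k. exp (- t i)) = (\<Prod>i\<le>k. if i \<in> S then exp (-1) else 1)"
    by (rule prod.cong) (auto simp: t_def)
  also have "\<dots> = (\<Prod>i\<in>S. exp (-1))"
    using assms by (simp add: prod.If_cases Int_absorb1 Int_absorb2)
  finally show ?thesis by (simp add: D_def)
qed

lemma prob_path_clock_pattern:
  assumes "finite U" "S \<inter> U = {}" "S \<union> U \<subseteq> {..k}"
  shows "prob {\<omega> \<in> space M. (\<forall>i\<le>k. Y i \<omega> = xs i) \<and> (\<forall>i\<in>S. 1 < E i \<omega>) \<and> (\<forall>i\<in>U. E i \<omega> \<le> 1)}
    = path_prob s0 k xs * exp (-1) ^ card S * (1 - exp (-1)) ^ card U"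
  using assms
proof (induction U arbitrary: S rule: finite_induct)
  case empty
  then show ?case by (simp add: prob_path_long_clocks)
next
  case (insert j U)
  have S: "finite S" "j \<notin> S" using insert finite_subset[of S "{..k}"] by auto
  define D where "D S' = {\<omega> \<in> space M. (\<forall>i\<le>k. Y i \<omega> = xs i) \<and> (\<forall>i\<in>S'. 1 < E i \<omega>) \<and> (\<forall>i\<in>U. E i \<omega> \<le> 1)}"
    for S'
  have [measurable]: "D S' \<in> sets M" if "finite S'" for S'
    unfolding D_def using that insert by measurable
  have "{\<omega> \<in> space M. (\<forall>i\<le>k. Y i \<omega> = xs i) \<and> (\<forall>i\<in>S. 1 < E i \<omega>) \<and> (\<forall>i\<in>insert j U. E i \<omega> \<le> 1)} =
      D S - D (insert j S)"
    unfolding D_def by auto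
  moreover have "prob (D S - D (insert j S)) = prob (D S) - prob (D (insert j S))"
    using S by (intro finite_measure_Diff) (auto simp: D_def)
  moreover have "prob (D S) = path_prob s0 k xs * exp (-1) ^ card S * (1 - exp (-1)) ^ card U"
    unfolding D_def using insert by (intro insert.IH) auto
  moreover have "prob (D (insert j S)) =
      path_prob s0 k xs * exp (-1) ^ card (insert j S) * (1 - exp (-1)) ^ card U"
    unfolding D_def using insert S by (intro insert.IH) auto
  ultimately show ?case
    using insert S by (simp add: algebra_simps)
qed

definition flag_event :: "nat \<Rightarrow> (nat \<Rightarrow> 's) \<Rightarrow> (nat \<Rightarrow> bool) \<Rightarrow> 'w set" where
  "flag_event k xs bs = {\<omega> \<in> space M. (\<forall>i\<le>k. Y i \<omega> = xs i) \<and> (\<forall>i<k. (1 < E i \<omega>) = bs i)}"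

lemma flag_event_eq:
  "flag_event k xs bs = {\<omega> \<in> space M. (\<forall>i\<le>k. Y i \<omega> = xs i) \<and> (\<forall>i\<in>{i. i < k \<and> bs i}. 1 < E i \<omega>) \<and>
    (\<forall>i\<in>{i. i < k \<and> \<not> bs i}. E i \<omega> \<le> 1)}"
  by (auto simp: flag_event_def)

lemma sets_flag_event [measurable]: "flag_event k xs bs \<in> sets M"
  unfolding flag_event_eq by measurable

lemma prob_flag_event:
  "prob (flag_event k xs bs) = path_prob s0 k xs * (\<Prod>i<k. if bs i then exp (-1) else 1 - exp (-1))"
proof -
  have "prob (flag_event k xs bs) = path_prob s0 k xs * (exp (-1) ^ card {i. i < k \<and> bs i} *
      (1 - exp (-1)) ^ card {i. i < k \<and> \<not> bs i})"
    unfolding flag_event_eq by (subst prob_path_clock_pattern) (auto simp: mult.assoc)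
  also have "exp (-1) ^ card {i. i < k \<and> bs i} * (1 - exp (-1)) ^ card {i. i < k \<and> \<not> bs i} =
      (\<Prod>i<k. if bs i then exp (-1) else 1 - exp (-1::real))"
    by (simp add: prod.If_cases Int_def lessThan_def)
  finally show ?thesis .
qed

lemma clock_weights_on_path_eq_sum:
  assumes "\<omega> \<in> space M"
  shows "ennreal (\<Prod>i<k. w (xs i) (1 < E i \<omega>)) * indicator {\<omega> \<in> space M. \<forall>i\<le>k. Y i \<omega> = xs i} \<omega> =
    (\<Sum>bs\<in>{..<k} \<rightarrow>\<^sub>E UNIV. ennreal (\<Prod>i<k. w (xs i) (bs i)) * indicator (flag_event k xs bs) \<omega>)"
proof (cases "\<forall>i\<le>k. Y i \<omega> = xs i")
  case True
  define b0 where "b0 = restrict (\<lambda>i. 1 < E i \<omega>) {..<k}"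
  have b0: "b0 \<in> {..<k} \<rightarrow>\<^sub>E UNIV" by (simp add: b0_def)
  have flag_iff: "\<omega> \<in> flag_event k xs bs \<longleftrightarrow> bs = b0" if bs: "bs \<in> {..<k} \<rightarrow>\<^sub>E UNIV" for bs
  proof
    assume "\<omega> \<in> flag_event k xs bs"
    then have "bs i = b0 i" if "i < k" for i using that by (simp add: flag_event_def b0_def)
    then show "bs = b0" using bs b0 by (intro PiE_ext) auto
  next
    assume "bs = b0"
    then show "\<omega> \<in> flag_event k xs bs" using True assms by (simp add: flag_event_def b0_def)
  qed
  have "(\<Sum>bs\<in>{..<k} \<rightarrow>\<^sub>E UNIV. ennreal (\<Prod>i<k. w (xs i) (bs i)) * indicator (flag_event k xs bs) \<omega>) =
      (\<Sum>bs\<in>{..<k} \<rightarrow>\<^sub>E UNIV. if bs = b0 then ennreal (\<Prod>i<k. w (xs i) (bs i)) else 0)"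
    by (intro sum.cong) (auto simp: indicator_def flag_iff)
  also have "\<dots> = ennreal (\<Prod>i<k. w (xs i) (b0 i))"
    using b0 finite_PiE[of "{..<k}" "\<lambda>_. UNIV :: bool set"] by (simp add: sum.delta)
  also have "(\<Prod>i<k. w (xs i) (b0 i)) = (\<Prod>i<k. w (xs i) (1 < E i \<omega>))"
    unfolding b0_def by (rule prod.cong) auto
  finally show ?thesis
    using True assms by simp
qed (simp add: flag_event_def)

lemma nn_integral_clock_weights_on_path:
  assumes w_nonneg: "\<And>s b. 0 \<le> w s b"
  shows "(\<integral>\<^sup>+\<omega>. ennreal (\<Prod>i<k. w (xs i) (1 < E i \<omega>)) *
      indicator {\<omega> \<in> space M. \<forall>i\<le>k. Y i \<omega> = xs i} \<omega> \<partial>M) =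
    ennreal (path_prob s0 k xs * (\<Prod>i<k. exp (-1) * w (xs i) True + (1 - exp (-1)) * w (xs i) False))"
proof -
  define c where "c b = (if b then exp (-1) else 1 - exp (-1::real))" for b
  have path_prob: "0 \<le> path_prob s0 k xs"
    using measure_nonneg[of M "{\<omega> \<in> space M. \<forall>i\<le>k. Y i \<omega> = xs i}"] by (simp add: prob_path)
  have flag: "(\<integral>\<^sup>+\<omega>. ennreal (\<Prod>i<k. w (xs i) (bs i)) * indicator (flag_event k xs bs) \<omega> \<partial>M) =
      ennreal (path_prob s0 k xs * (\<Prod>i<k. w (xs i) (bs i) * c (bs i)))" for bs
  proof -
    have W: "0 \<le> (\<Prod>i<k. w (xs i) (bs i))" by (simp add: prod_nonneg w_nonneg)
    have "(\<integral>\<^sup>+\<omega>. ennreal (\<Prod>i<k. w (xs i) (bs i)) * indicator (flag_event k xs bs) \<omega> \<partial>M) =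
        ennreal (\<Prod>i<k. w (xs i) (bs i)) * ennreal (path_prob s0 k xs * (\<Prod>i<k. c (bs i)))"
      by (simp add: nn_integral_cmult_indicator emeasure_eq_measure prob_flag_event c_def)
    also have "\<dots> = ennreal ((\<Prod>i<k. w (xs i) (bs i)) * (path_prob s0 k xs * (\<Prod>i<k. c (bs i))))"
      by (rule ennreal_mult'[symmetric, OF W])
    also have "(\<Prod>i<k. w (xs i) (bs i)) * (path_prob s0 k xs * (\<Prod>i<k. c (bs i))) =
        path_prob s0 k xs * (\<Prod>i<k. w (xs i) (bs i) * c (bs i))"
      by (simp add: prod.distrib)
    finally show ?thesis .
  qed
  have "(\<integral>\<^sup>+\<omega>. ennreal (\<Prod>i<k. w (xs i) (1 < E i \<omega>)) *
      indicator {\<omega> \<in> space M. \<forall>i\<le>k. Y i \<omega> = xs i} \<omega> \<partial>M) =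
      (\<integral>\<^sup>+\<omega>. (\<Sum>bs\<in>{..<k} \<rightarrow>\<^sub>E UNIV. ennreal (\<Prod>i<k. w (xs i) (bs i)) *
        indicator (flag_event k xs bs) \<omega>) \<partial>M)"
    by (rule nn_integral_cong) (rule clock_weights_on_path_eq_sum)
  also have "\<dots> = (\<Sum>bs\<in>{..<k} \<rightarrow>\<^sub>E UNIV. ennreal (path_prob s0 k xs * (\<Prod>i<k. w (xs i) (bs i) * c (bs i))))"
    unfolding flag[symmetric] by (intro nn_integral_sum) measurable
  also have "\<dots> = ennreal (\<Sum>bs\<in>{..<k} \<rightarrow>\<^sub>E UNIV. path_prob s0 k xs * (\<Prod>i<k. w (xs i) (bs i) * c (bs i)))"
  proof (rule sum_ennreal)
    fix bs
    show "0 \<le> path_prob s0 k xs * (\<Prod>i<k. w (xs i) (bs i) * c (bs i))"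
      using path_prob w_nonneg by (intro mult_nonneg_nonneg prod_nonneg) (simp_all add: c_def)
  qed
  also have "(\<Sum>bs\<in>{..<k} \<rightarrow>\<^sub>E UNIV. path_prob s0 k xs * (\<Prod>i<k. w (xs i) (bs i) * c (bs i))) =
      path_prob s0 k xs * (\<Prod>i<k. \<Sum>b\<in>UNIV. w (xs i) b * c b)"
    by (simp only: prod_sum_PiE[OF finite_lessThan finite] sum_distrib_left)
  finally show ?thesis
    by (simp add: UNIV_bool c_def mult_ac add.commute)
qed

lemma AE_on_some_path: "AE \<omega> in M. \<exists>xs\<in>paths K. \<forall>i\<le>K. Y i \<omega> = xs i"
proof -
  define A where "A xs = {\<omega> \<in> space M. \<forall>i\<le>K. Y i \<omega> = xs i}" for xs
  have [measurable]: "A xs \<in> sets M" for xs unfolding A_def by measurable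
  have disjoint: "disjoint_family_on A (paths K)"
    unfolding disjoint_family_on_def A_def by (auto dest: paths_eqI)
  have "emeasure M (\<Union>xs\<in>paths K. A xs) = (\<integral>\<^sup>+xs. emeasure M (A xs) \<partial>count_space (paths K))"
    by (rule emeasure_UN_countable[OF _ countable_paths disjoint]) simp
  also have "\<dots> = path_sum s0 (\<lambda>_. 1) K (\<lambda>_. 1)"
    unfolding path_sum_def A_def by (intro nn_integral_cong) (simp add: emeasure_eq_measure prob_path)
  also have "\<dots> = 1" by (rule path_sum_one[OF initial_state])
  finally have "AE \<omega> in M. \<omega> \<in> (\<Union>xs\<in>paths K. A xs)"
    by (intro AE_prob_1) (simp add: emeasure_eq_measure)
  then show ?thesis
    by eventually_elim (auto simp: A_def)
qed

lemma nn_integral_clock_weights: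
  assumes w_nonneg: "\<And>s b. 0 \<le> w s b"
  shows "(\<integral>\<^sup>+\<omega>. ennreal (\<Prod>i<K. w (Y i \<omega>) (1 < E i \<omega>)) \<partial>M) =
    path_sum s0 (\<lambda>s. exp (-1) * w s True + (1 - exp (-1)) * w s False) K (\<lambda>_. 1)"
proof -
  define A where "A xs = {\<omega> \<in> space M. \<forall>i\<le>K. Y i \<omega> = xs i}" for xs
  define Z where "Z \<omega> = ennreal (\<Prod>i<K. w (Y i \<omega>) (1 < E i \<omega>))" for \<omega>
  have [measurable]: "A xs \<in> sets M" for xs unfolding A_def by measurable
  have [measurable]: "Z \<in> borel_measurable M" unfolding Z_def by measurable
  have split: "Z \<omega> = (\<integral>\<^sup>+xs. Z \<omega> * indicator (A xs) \<omega> \<partial>count_space (paths K))"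
    if \<omega>: "\<omega> \<in> space M" "\<exists>xs\<in>paths K. \<forall>i\<le>K. Y i \<omega> = xs i" for \<omega>
  proof -
    obtain x0 where x0: "x0 \<in> paths K" "\<omega> \<in> A x0" using \<omega> by (auto simp: A_def)
    have "(\<integral>\<^sup>+xs. Z \<omega> * indicator (A xs) \<omega> \<partial>count_space (paths K)) =
        (\<Sum>xs\<in>{x0}. Z \<omega> * indicator (A xs) \<omega>)"
    proof (rule nn_integral_count_space')
      fix xs assume "xs \<in> paths K" "xs \<notin> {x0}"
      then have "\<omega> \<notin> A xs" using x0 paths_eqI[of xs K x0] by (auto simp: A_def)
      then show "Z \<omega> * indicator (A xs) \<omega> = 0" by simp
    qed (use x0 in auto)
    then show ?thesis using x0 by simp
  qed
  have on_path: "Z \<omega> * indicator (A xs) \<omega> = ennreal (\<Prod>i<K. w (xs i) (1 < E i \<omega>)) * indicator (A xs) \<omega>"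
    for \<omega> xs
    unfolding Z_def A_def by (auto simp: indicator_def intro!: prod.cong)
  have "AE \<omega> in M. Z \<omega> = (\<integral>\<^sup>+xs. Z \<omega> * indicator (A xs) \<omega> \<partial>count_space (paths K))"
    using AE_space AE_on_some_path[of K] by eventually_elim (rule split)
  then have "(\<integral>\<^sup>+\<omega>. Z \<omega> \<partial>M) = (\<integral>\<^sup>+\<omega>. \<integral>\<^sup>+xs. Z \<omega> * indicator (A xs) \<omega> \<partial>count_space (paths K) \<partial>M)"
    by (rule nn_integral_cong_AE)
  also have "\<dots> = (\<integral>\<^sup>+xs. \<integral>\<^sup>+\<omega>. Z \<omega> * indicator (A xs) \<omega> \<partial>M \<partial>count_space (paths K))"
    by (intro nn_integral_count_space_nn_integral countable_paths) measurable
  also have "\<dots> = path_sum s0 (\<lambda>s. exp (-1) * w s True + (1 - exp (-1)) * w s False) K (\<lambda>_. 1)"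
    unfolding path_sum_def
  proof (intro nn_integral_cong)
    fix xs
    have "(\<integral>\<^sup>+\<omega>. Z \<omega> * indicator (A xs) \<omega> \<partial>M) =
        (\<integral>\<^sup>+\<omega>. ennreal (\<Prod>i<K. w (xs i) (1 < E i \<omega>)) * indicator (A xs) \<omega> \<partial>M)"
      by (simp only: on_path)
    also have "\<dots> = ennreal (path_prob s0 K xs *
        (\<Prod>i<K. exp (-1) * w (xs i) True + (1 - exp (-1)) * w (xs i) False))"
      unfolding A_def by (rule nn_integral_clock_weights_on_path[OF w_nonneg])
    finally show "(\<integral>\<^sup>+\<omega>. Z \<omega> * indicator (A xs) \<omega> \<partial>M) = ennreal (path_prob s0 K xs *
        (\<Prod>i<K. exp (-1) * w (xs i) True + (1 - exp (-1)) * w (xs i) False)) * 1"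
      by simp
  qed
  finally show ?thesis unfolding Z_def .
qed

lemma nn_integral_discount_product_le:
  assumes lam: "lam > 0" and \<rho>: "0 \<le> \<rho>" and V_nonneg: "\<forall>s\<in>R. 0 \<le> V s"
    and step: "\<forall>s\<in>R. V s < 1 \<longrightarrow> mean_discount lam (total_rate r tgt s) \<le> \<rho> \<and>
      ennreal (mean_discount lam (total_rate r tgt s)) * jump_op (\<lambda>s'. ennreal (V s')) s \<le> ennreal (V s)"
  shows "(\<integral>\<^sup>+\<omega>. ennreal (\<Prod>k<K. discount lam (total_rate r tgt (Y k \<omega>)) (1 < E k \<omega>)) \<partial>M) \<le>
    ennreal (\<rho> ^ K + V s0)"
proof -
  have "(\<integral>\<^sup>+\<omega>. ennreal (\<Prod>k<K. discount lam (total_rate r tgt (Y k \<omega>)) (1 < E k \<omega>)) \<partial>M) =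
      path_sum s0 (\<lambda>s. mean_discount lam (total_rate r tgt s)) K (\<lambda>_. 1)"
    unfolding mean_discount_def by (rule nn_integral_clock_weights) (rule discount_nonneg)
  also have "\<dots> \<le> ennreal (\<rho> ^ K + V s0)"
    using \<rho> V_nonneg step lam initial_state
    by (intro path_sum_le_lyapunov) (auto intro: mean_discount_nonneg mean_discount_le_one total_rate_nonneg)
  finally show ?thesis .
qed

theorem AE_explosion_time_infinite:
  assumes lam: "lam > 0"
    and lyapunov: "\<And>\<epsilon>. \<epsilon> > 0 \<Longrightarrow> \<exists>V \<rho>. 0 \<le> \<rho> \<and> \<rho> < 1 \<and> V s0 < \<epsilon> \<and> (\<forall>s\<in>R. 0 \<le> V s) \<and>
      (\<forall>s\<in>R. V s < 1 \<longrightarrow> mean_discount lam (total_rate r tgt s) \<le> \<rho> \<and>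
        ennreal (mean_discount lam (total_rate r tgt s)) * jump_op (\<lambda>s'. ennreal (V s')) s \<le> ennreal (V s))"
  shows "AE \<omega> in M. explosion_time r tgt Y E \<omega> = \<infinity>"
proof -
  define Z where "Z K \<omega> = (\<Prod>k<K. discount lam (total_rate r tgt (Y k \<omega>)) (1 < E k \<omega>))" for K \<omega>
  have [measurable]: "Z K \<in> borel_measurable M" for K unfolding Z_def by measurable
  have small: "\<exists>K. (\<integral>\<^sup>+\<omega>. ennreal (Z K \<omega>) \<partial>M) \<le> ennreal \<epsilon>" if "\<epsilon> > 0" for \<epsilon>
  proof -
    obtain V \<rho> where \<rho>: "0 \<le> \<rho>" "\<rho> < 1" and V: "V s0 < \<epsilon> / 2" "\<forall>s\<in>R. 0 \<le> V s"
      and step: "\<forall>s\<in>R. V s < 1 \<longrightarrow> mean_discount lam (total_rate r tgt s) \<le> \<rho> \<and>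
        ennreal (mean_discount lam (total_rate r tgt s)) * jump_op (\<lambda>s'. ennreal (V s')) s \<le> ennreal (V s)"
      using lyapunov[of "\<epsilon> / 2"] \<open>\<epsilon> > 0\<close> by auto
    obtain K where K: "\<rho> ^ K < \<epsilon> / 2"
      using real_arch_pow_inv[of "\<epsilon> / 2" \<rho>] \<rho> \<open>\<epsilon> > 0\<close> by auto
    have "(\<integral>\<^sup>+\<omega>. ennreal (Z K \<omega>) \<partial>M) \<le> ennreal (\<rho> ^ K + V s0)"
      unfolding Z_def using lam \<rho>(1) V(2) step by (rule nn_integral_discount_product_le)
    also have "\<dots> \<le> ennreal \<epsilon>"
      using K V by (intro ennreal_leI) simp
    finally show ?thesis ..
  qed
  have "(\<Union>m::nat. {\<omega> \<in> space M. \<forall>K. exp (- lam * m) \<le> Z K \<omega>}) \<in> null_sets M"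
    using small by (intro null_sets_UN null_sets_uniformly_bounded_below) auto
  then show ?thesis
  proof (rule AE_I', safe)
    fix \<omega> assume "\<omega> \<in> space M" "explosion_time r tgt Y E \<omega> \<noteq> \<infinity>"
    then obtain m :: nat where "explosion_time r tgt Y E \<omega> < of_nat m"
      by (metis ennreal_Ex_less_of_nat infinity_ennreal_def less_top)
    then have "\<forall>K. exp (- lam * m) \<le> Z K \<omega>"
      unfolding explosion_time_def Z_def
      using exp_le_discount_product[OF lam, of "\<lambda>k. total_rate r tgt (Y k \<omega>)" "\<lambda>k. E k \<omega>"] by blast
    with \<open>\<omega> \<in> space M\<close> show "\<omega> \<in> (\<Union>m::nat. {\<omega> \<in> space M. \<forall>K. exp (- lam * m) \<le> Z K \<omega>})"
      by blast
  qed
qed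

end

lemma (in rate_system) non_explosive_if_lyapunov:
  assumes lam: "lam > 0"
    and lyapunov: "\<And>s0 \<epsilon>. s0 \<in> R \<Longrightarrow> \<epsilon> > 0 \<Longrightarrow> \<exists>V \<rho>. 0 \<le> \<rho> \<and> \<rho> < 1 \<and> V s0 < \<epsilon> \<and>
      (\<forall>s\<in>R. 0 \<le> V s) \<and>
      (\<forall>s\<in>R. V s < 1 \<longrightarrow> mean_discount lam (total_rate r tgt s) \<le> \<rho> \<and>
        ennreal (mean_discount lam (total_rate r tgt s)) * jump_op (\<lambda>s'. ennreal (V s')) s \<le> ennreal (V s))"
  shows "non_explosive r tgt R TYPE('w)"
  unfolding non_explosive_def
proof (intro ballI allI impI)
  fix s0 and M :: "'w measure" and Y E
  assume "s0 \<in> R" "ctmc_realization r tgt s0 M Y E"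
  then interpret chain_realization r tgt R s0 M Y E
    by unfold_locales
  show "AE \<omega> in M. explosion_time r tgt Y E \<omega> = \<infinity>"
    using lam lyapunov[OF initial_state] by (rule AE_explosion_time_infinite)
qed

section \<open>The compartment model\<close>

definition occupied :: "(nat \<Rightarrow> nat) \<Rightarrow> nat set" where
  "occupied n = {x. n x \<noteq> 0}"

definition compartments :: "(nat \<Rightarrow> nat) \<Rightarrow> nat" where
  "compartments n = (\<Sum>x\<in>occupied n. n x)"

definition molecules :: "(nat \<Rightarrow> nat) \<Rightarrow> nat" where
  "molecules n = (\<Sum>x\<in>occupied n. x * n x)"

definition population :: "(nat \<Rightarrow> nat) \<Rightarrow> nat" where
  "population n = (\<Sum>x\<in>occupied n. (x + 1) * n x)"

lemma population_eq: "population n = compartments n + molecules n"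
  unfolding population_def compartments_def molecules_def
  by (simp add: sum.distrib[symmetric] algebra_simps)

lemma finite_occupied: "n \<in> fin_states \<Longrightarrow> finite (occupied n)"
  by (simp add: fin_states_def occupied_def)

lemma fun_upd_in_fin_states:
  assumes "n \<in> fin_states"
  shows "n(x := v) \<in> fin_states"
proof -
  have "{y. (n(x := v)) y \<noteq> 0} \<subseteq> insert x {y. n y \<noteq> 0}" by auto
  from finite_subset[OF this] show ?thesis using assms by (simp add: fin_states_def)
qed

lemma add1_in_fin_states: "n \<in> fin_states \<Longrightarrow> add1 n x \<in> fin_states"
  unfolding add1_def by (rule fun_upd_in_fin_states)

lemma del1_in_fin_states: "n \<in> fin_states \<Longrightarrow> del1 n x \<in> fin_states"
  unfolding del1_def by (rule fun_upd_in_fin_states)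

lemma comp_tgt_in_fin_states: "n \<in> fin_states \<Longrightarrow> comp_tgt c n \<in> fin_states"
  unfolding comp_tgt_def by (cases c) (auto intro!: add1_in_fin_states del1_in_fin_states)

lemma countable_fin_states: "countable fin_states"
proof -
  define f :: "nat list \<Rightarrow> nat \<Rightarrow> nat" where "f xs i = (if i < length xs then xs ! i else 0)" for xs i
  have "n \<in> range f" if n: "n \<in> fin_states" for n
  proof -
    obtain N where N: "\<And>i. n i \<noteq> 0 \<Longrightarrow> i < N"
      using finite_nat_bounded[OF finite_occupied[OF n]] by (auto simp: occupied_def)
    have "n i = 0" if "N \<le> i" for i
      using N[of i] that by (cases "n i = 0") auto
    then have "n = f (map n [0..<N])"
      by (auto simp: f_def fun_eq_iff not_less)
    then show ?thesis by blast
  qed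
  then have "fin_states \<subseteq> range f" by blast
  then show ?thesis by (rule countable_subset) simp
qed

lemma sum_occupied_eq:
  assumes "finite S" "occupied n \<subseteq> S" "\<And>x. n x = 0 \<Longrightarrow> f x = (0::'a::comm_monoid_add)"
  shows "(\<Sum>x\<in>occupied n. f x) = (\<Sum>x\<in>S. f x)"
  by (rule sum.mono_neutral_left) (use assms in \<open>auto simp: occupied_def\<close>)

lemma population_fun_upd:
  assumes n: "n \<in> fin_states"
  shows "population (n(x := v)) + (x + 1) * n x = population n + (x + 1) * v"
proof -
  define S where "S = insert x (occupied n)"
  have S: "finite S" "x \<in> S" using finite_occupied[OF n] by (simp_all add: S_def)
  have "population (n(x := v)) = (\<Sum>y\<in>S. (y + 1) * (n(x := v)) y)"
    unfolding population_def by (rule sum_occupied_eq) (use S in \<open>auto simp: S_def occupied_def\<close>)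
  also have "\<dots> = (x + 1) * v + (\<Sum>y\<in>S - {x}. (y + 1) * n y)"
    using S by (simp add: sum.remove)
  finally have upd: "population (n(x := v)) = (x + 1) * v + (\<Sum>y\<in>S - {x}. (y + 1) * n y)" .
  have "population n = (\<Sum>y\<in>S. (y + 1) * n y)"
    unfolding population_def by (rule sum_occupied_eq) (use S in \<open>auto simp: S_def\<close>)
  also have "\<dots> = (x + 1) * n x + (\<Sum>y\<in>S - {x}. (y + 1) * n y)"
    using S by (simp add: sum.remove)
  finally show ?thesis using upd by simp
qed

lemma population_add1: "n \<in> fin_states \<Longrightarrow> population (add1 n x) = population n + (x + 1)"
  using population_fun_upd[of n x "Suc (n x)"] unfolding add1_def by simp

lemma population_del1:
  "n \<in> fin_states \<Longrightarrow> n x \<noteq> 0 \<Longrightarrow> population (del1 n x) + (x + 1) = population n"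
  using population_fun_upd[of n x "n x - 1"] unfolding del1_def by (cases "n x") auto

lemma nn_integral_occupied:
  assumes "n \<in> fin_states" "\<And>x. n x = 0 \<Longrightarrow> f x = 0" "\<And>x. 0 \<le> f x"
  shows "(\<integral>\<^sup>+x. ennreal (f x) \<partial>count_space UNIV) = ennreal (\<Sum>x\<in>occupied n. f x)"
proof -
  have "(\<integral>\<^sup>+x. ennreal (f x) \<partial>count_space UNIV) = (\<Sum>x\<in>occupied n. ennreal (f x))"
    by (rule nn_integral_count_space') (use assms finite_occupied in \<open>auto simp: occupied_def\<close>)
  also have "\<dots> = ennreal (\<Sum>x\<in>occupied n. f x)"
    using assms by (simp add: sum_ennreal)
  finally show ?thesis .
qed

lemma nn_integral_cevent:
  fixes f :: "cevent \<Rightarrow> ennreal"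
  shows "(\<integral>\<^sup>+e. f e \<partial>count_space UNIV) =
    (\<integral>\<^sup>+x. f (Birth x) \<partial>count_space UNIV) + (\<integral>\<^sup>+x. f (Death x) \<partial>count_space UNIV) +
    (\<integral>\<^sup>+x. f (Inflow x) \<partial>count_space UNIV) + (\<integral>\<^sup>+x. f (Exit x) \<partial>count_space UNIV) +
    (\<integral>\<^sup>+x. \<integral>\<^sup>+y. f (Frag x y) \<partial>count_space UNIV \<partial>count_space UNIV) +
    (\<integral>\<^sup>+x. \<integral>\<^sup>+y. f (Coag x y) \<partial>count_space UNIV \<partial>count_space UNIV)"
proof -
  define frag where "frag p = Frag (fst p) (snd p)" for p
  define coag where "coag p = Coag (fst p) (snd p)" for p
  have inj: "inj Birth" "inj Death" "inj Inflow" "inj Exit" "inj frag" "inj coag"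
    by (auto simp: inj_def frag_def coag_def prod_eq_iff)
  have pairs: "(\<integral>\<^sup>+x. \<integral>\<^sup>+y. f (Frag x y) \<partial>count_space UNIV \<partial>count_space UNIV) =
      (\<integral>\<^sup>+p. f (frag p) \<partial>count_space UNIV)"
    "(\<integral>\<^sup>+x. \<integral>\<^sup>+y. f (Coag x y) \<partial>count_space UNIV \<partial>count_space UNIV) =
      (\<integral>\<^sup>+p. f (coag p) \<partial>count_space UNIV)"
    by (simp_all add: frag_def coag_def flip: nn_integral_fst_count_space)
  have split: "f e = f e * indicator (range Birth) e + f e * indicator (range Death) e +
      f e * indicator (range Inflow) e + f e * indicator (range Exit) e +
      f e * indicator (range frag) e + f e * indicator (range coag) e" for e
    by (cases e) (auto simp: indicator_def frag_def coag_def image_iff)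
  have "(\<integral>\<^sup>+e. f e \<partial>count_space UNIV) =
      (\<integral>\<^sup>+e. f e * indicator (range Birth) e + f e * indicator (range Death) e +
      f e * indicator (range Inflow) e + f e * indicator (range Exit) e +
      f e * indicator (range frag) e + f e * indicator (range coag) e \<partial>count_space UNIV)"
    by (rule nn_integral_cong) (rule split)
  also have "\<dots> = (\<integral>\<^sup>+e. f e * indicator (range Birth) e \<partial>count_space UNIV) +
      (\<integral>\<^sup>+e. f e * indicator (range Death) e \<partial>count_space UNIV) +
      (\<integral>\<^sup>+e. f e * indicator (range Inflow) e \<partial>count_space UNIV) +
      (\<integral>\<^sup>+e. f e * indicator (range Exit) e \<partial>count_space UNIV) +
      (\<integral>\<^sup>+e. f e * indicator (range frag) e \<partial>count_space UNIV) +
      (\<integral>\<^sup>+e. f e * indicator (range coag) e \<partial>count_space UNIV)"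
    by (simp add: nn_integral_add)
  finally show ?thesis
    by (simp add: pairs nn_integral_range_inj[OF inj(1)] nn_integral_range_inj[OF inj(2)]
        nn_integral_range_inj[OF inj(3)] nn_integral_range_inj[OF inj(4)]
        nn_integral_range_inj[OF inj(5)] nn_integral_range_inj[OF inj(6)])
qed

locale compartment_model =
  fixes kb kd kI kE kF kC :: real and mu :: "nat pmf" and psi :: "nat \<Rightarrow> nat pmf"
  assumes kb: "kb \<ge> 0" and kd: "kd \<ge> 0" and kI: "kI \<ge> 0" and kE: "kE \<ge> 0"
    and kF: "kF \<ge> 0" and kC: "kC \<ge> 0"
    and psi_le: "\<And>x. set_pmf (psi x) \<subseteq> {..x}"
begin

abbreviation rate :: "cevent \<Rightarrow> (nat \<Rightarrow> nat) \<Rightarrow> real" where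
  "rate \<equiv> comp_rate kb kd kI kE kF kC mu psi"

lemma rate_simps:
  "rate (Birth x) n = kb * real (n x)"
  "rate (Death x) n = kd * real (n x) * real x"
  "rate (Inflow x) n = kI * pmf mu x"
  "rate (Exit x) n = kE * real (n x)"
  "rate (Frag x y) n = kF * real x * real (n x) * pmf (psi x) y"
  "rate (Coag x y) n = (if x = y then kC * real (n x choose 2) else kC * real (n x) * real (n y) / 2)"
  by (simp_all add: comp_rate_def)

lemma comp_rate_nonneg: "0 \<le> rate c n"
  by (cases c) (auto simp: rate_simps kb kd kI kE kF kC)

lemma birth_rates: "n \<in> fin_states \<Longrightarrow>
  (\<integral>\<^sup>+x. ennreal (rate (Birth x) n) \<partial>count_space UNIV) = ennreal (kb * compartments n)"
  by (subst nn_integral_occupied[where n=n]) (auto simp: rate_simps kb compartments_def sum_distrib_left)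

lemma death_rates: "n \<in> fin_states \<Longrightarrow>
  (\<integral>\<^sup>+x. ennreal (rate (Death x) n) \<partial>count_space UNIV) = ennreal (kd * molecules n)"
  by (subst nn_integral_occupied[where n=n]) (auto simp: rate_simps kd molecules_def sum_distrib_left mult_ac)

lemma exit_rates: "n \<in> fin_states \<Longrightarrow>
  (\<integral>\<^sup>+x. ennreal (rate (Exit x) n) \<partial>count_space UNIV) = ennreal (kE * compartments n)"
  by (subst nn_integral_occupied[where n=n]) (auto simp: rate_simps kE compartments_def sum_distrib_left)

lemma inflow_rates: "(\<integral>\<^sup>+x. ennreal (rate (Inflow x) n) \<partial>count_space UNIV) = ennreal kI"
  by (simp add: rate_simps ennreal_mult kI nn_integral_cmult nn_integral_pmf_eq_1)

lemma frag_rates: "n \<in> fin_states \<Longrightarrow>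
  (\<integral>\<^sup>+x. \<integral>\<^sup>+y. ennreal (rate (Frag x y) n) \<partial>count_space UNIV \<partial>count_space UNIV) =
    ennreal (kF * molecules n)"
proof -
  assume n: "n \<in> fin_states"
  have "(\<integral>\<^sup>+y. ennreal (rate (Frag x y) n) \<partial>count_space UNIV) = ennreal (kF * real x * real (n x))" for x
    by (simp add: rate_simps ennreal_mult kF nn_integral_cmult nn_integral_pmf_eq_1)
  then show ?thesis
    by (simp, subst nn_integral_occupied[OF n]) (auto simp: kF molecules_def sum_distrib_left mult_ac)
qed

lemma coag_rate_le: "rate (Coag x y) n \<le> kC * real (n x) * real (n y)"
proof (cases "x = y")
  case True
  have "n x choose 2 \<le> n x * n x"
    using binomial_le_pow[of 2 "n x"] by (cases "2 \<le> n x") (auto simp: power2_eq_square binomial_eq_0)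
  then have "real (n x choose 2) \<le> real (n x) * real (n x)"
    by (metis of_nat_le_iff of_nat_mult)
  then show ?thesis using True kC by (simp add: rate_simps mult_left_mono mult.assoc)
qed (use kC in \<open>simp add: rate_simps\<close>)

lemma coag_rates: "n \<in> fin_states \<Longrightarrow>
  (\<integral>\<^sup>+x. \<integral>\<^sup>+y. ennreal (rate (Coag x y) n) \<partial>count_space UNIV \<partial>count_space UNIV) \<le>
    ennreal (kC * compartments n * compartments n)"
proof -
  assume n: "n \<in> fin_states"
  have "(\<integral>\<^sup>+x. \<integral>\<^sup>+y. ennreal (rate (Coag x y) n) \<partial>count_space UNIV \<partial>count_space UNIV) \<le>
      (\<integral>\<^sup>+x. \<integral>\<^sup>+y. ennreal (kC * real (n x) * real (n y)) \<partial>count_space UNIV \<partial>count_space UNIV)"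
    by (intro nn_integral_mono ennreal_leI coag_rate_le)
  also have "\<dots> = (\<integral>\<^sup>+x. ennreal (kC * real (n x) * compartments n) \<partial>count_space UNIV)"
    by (intro nn_integral_cong, subst nn_integral_occupied[OF n])
      (auto simp: kC compartments_def sum_distrib_left intro!: sum_nonneg)
  also have "\<dots> = ennreal (kC * compartments n * compartments n)"
    by (subst nn_integral_occupied[OF n])
      (auto simp: kC compartments_def sum_distrib_left sum_distrib_right mult_ac intro!: sum_nonneg)
  finally show ?thesis .
qed

definition rate_bound :: "(nat \<Rightarrow> nat) \<Rightarrow> real" where
  "rate_bound n = kb * compartments n + kd * molecules n + kI + kE * compartments n +
    kF * molecules n + kC * compartments n * compartments n"

lemma nn_integral_rate_le:
  assumes n: "n \<in> fin_states"
  shows "(\<integral>\<^sup>+e. ennreal (rate e n) \<partial>count_space UNIV) \<le> ennreal (rate_bound n)"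
proof -
  have "(\<integral>\<^sup>+e. ennreal (rate e n) \<partial>count_space UNIV) \<le>
      ennreal (kb * compartments n) + ennreal (kd * molecules n) + ennreal kI +
      ennreal (kE * compartments n) + ennreal (kF * molecules n) +
      ennreal (kC * compartments n * compartments n)"
    unfolding nn_integral_cevent[of "\<lambda>e. ennreal (rate e n)"] birth_rates[OF n] death_rates[OF n]
      inflow_rates exit_rates[OF n] frag_rates[OF n]
    by (intro add_left_mono coag_rates[OF n])
  also have "\<dots> = ennreal (rate_bound n)"
    unfolding rate_bound_def by (simp add: kb kd kI kE kF kC flip: ennreal_plus)
  finally show ?thesis .
qed

sublocale rate_system rate comp_tgt fin_states
proof
  show "(\<integral>\<^sup>+e. ennreal (rate e n) \<partial>count_space UNIV) < \<infinity>" if "n \<in> fin_states" for n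
    using nn_integral_rate_le[OF that] by (simp add: le_less_trans)
qed (auto simp: countable_fin_states comp_tgt_in_fin_states comp_rate_nonneg)

lemma total_rate_le_rate_bound:
  assumes n: "n \<in> fin_states"
  shows "total_rate rate comp_tgt n \<le> rate_bound n"
proof -
  have "ennreal (total_rate rate comp_tgt n) \<le> (\<integral>\<^sup>+e. ennreal (rate e n) \<partial>count_space UNIV)"
    unfolding ennreal_total_rate[OF n] by (rule nn_integral_count_space_subset) simp
  also have "\<dots> \<le> ennreal (rate_bound n)" by (rule nn_integral_rate_le[OF n])
  finally have "ennreal (total_rate rate comp_tgt n) \<le> ennreal (rate_bound n)" .
  moreover have "0 \<le> rate_bound n" using kb kd kI kE kF kC by (simp add: rate_bound_def)
  ultimately show ?thesis by simp
qed

lemma inflow_rate_le_total_rate: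
  assumes n: "n \<in> fin_states"
  shows "kI \<le> total_rate rate comp_tgt n"
proof -
  have "range Inflow \<subseteq> {e. comp_tgt e n \<noteq> n}"
    by (auto simp: comp_tgt_def add1_def fun_eq_iff)
  then have "(\<integral>\<^sup>+e. ennreal (rate e n) \<partial>count_space (range Inflow)) \<le> ennreal (total_rate rate comp_tgt n)"
    unfolding ennreal_total_rate[OF n] by (rule nn_integral_count_space_subset)
  moreover have "(\<integral>\<^sup>+e. ennreal (rate e n) \<partial>count_space (range Inflow)) = ennreal kI"
    using nn_integral_range_inj[of Inflow "\<lambda>e. ennreal (rate e n)"]
    by (simp add: inflow_rates nn_integral_count_space_indicator inj_def)
  ultimately show ?thesis
    using total_rate_nonneg[OF n] by simp
qed

definition growth :: "cevent \<Rightarrow> nat" where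
  "growth e = (case e of Birth _ \<Rightarrow> 1 | Frag _ _ \<Rightarrow> 1 | Inflow x \<Rightarrow> x + 1 | _ \<Rightarrow> 0)"

lemma population_comp_tgt_le:
  assumes n: "n \<in> fin_states" and pos: "rate e n > 0"
  shows "population (comp_tgt e n) \<le> population n + growth e"
proof (cases e)
  case (Birth x)
  then have "n x \<noteq> 0" using pos by (auto simp: rate_simps intro: ccontr)
  then show ?thesis
    using population_del1[OF n, of x] population_add1[OF del1_in_fin_states[OF n], of x "x + 1"] Birth
    by (simp add: comp_tgt_def growth_def)
next
  case (Death x)
  then have "n x \<noteq> 0" "x \<noteq> 0" using pos by (auto simp: rate_simps intro: ccontr)
  then show ?thesis
    using population_del1[OF n, of x] population_add1[OF del1_in_fin_states[OF n], of x "x - 1"] Death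
    by (simp add: comp_tgt_def growth_def)
next
  case (Inflow x)
  then show ?thesis using population_add1[OF n, of x] by (simp add: comp_tgt_def growth_def)
next
  case (Exit x)
  then have "n x \<noteq> 0" using pos by (auto simp: rate_simps intro: ccontr)
  then show ?thesis using population_del1[OF n, of x] Exit by (simp add: comp_tgt_def growth_def)
next
  case (Frag x y)
  then have "n x \<noteq> 0" "pmf (psi x) y \<noteq> 0" using pos by (auto simp: rate_simps intro: ccontr)
  then have "y \<le> x" using psi_le[of x] by (auto simp: set_pmf_iff[symmetric])
  have n1: "del1 n x \<in> fin_states" by (rule del1_in_fin_states[OF n])
  have n2: "add1 (del1 n x) y \<in> fin_states" by (rule add1_in_fin_states[OF n1])
  show ?thesis
    using population_del1[OF n, of x] population_add1[OF n1, of y] population_add1[OF n2, of "x - y"]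
      Frag \<open>n x \<noteq> 0\<close> \<open>y \<le> x\<close>
    by (simp add: comp_tgt_def growth_def)
next
  case (Coag x y)
  have "n x \<noteq> 0" "del1 n x y \<noteq> 0"
  proof -
    have "rate (Coag x y) n \<noteq> 0" using pos Coag by simp
    then show "n x \<noteq> 0" "del1 n x y \<noteq> 0"
      by (cases "x = y"; cases "n x"; auto simp: rate_simps del1_def binomial_eq_0)+
  qed
  have n1: "del1 n x \<in> fin_states" by (rule del1_in_fin_states[OF n])
  have n2: "del1 (del1 n x) y \<in> fin_states" by (rule del1_in_fin_states[OF n1])
  show ?thesis
    using population_del1[OF n, of x] population_del1[OF n1, of y] population_add1[OF n2, of "x + y"]
      Coag \<open>n x \<noteq> 0\<close> \<open>del1 n x y \<noteq> 0\<close>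
    by (simp add: comp_tgt_def growth_def)
qed

definition lyap :: "real \<Rightarrow> real \<Rightarrow> (nat \<Rightarrow> nat) \<Rightarrow> real" where
  "lyap L \<delta> n = min 1 ((real (population n) + 1) / L + \<delta>)"

definition lyap_increment :: "real \<Rightarrow> cevent \<Rightarrow> real" where
  "lyap_increment L e = (case e of Inflow x \<Rightarrow> min 1 ((real x + 1) / L) | _ \<Rightarrow> real (growth e) / L)"

definition inflow_increment :: "real \<Rightarrow> cevent \<Rightarrow> real" where
  "inflow_increment L e = (case e of Inflow x \<Rightarrow> min 1 ((real x + 1) / L) | _ \<Rightarrow> 0)"

lemma lyap_nonneg: "L > 0 \<Longrightarrow> \<delta> \<ge> 0 \<Longrightarrow> 0 \<le> lyap L \<delta> n"
  unfolding lyap_def by simp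

lemma lyap_increment_nonneg: "L > 0 \<Longrightarrow> 0 \<le> lyap_increment L e"
  by (cases e) (auto simp: lyap_increment_def)

lemma inflow_increment_nonneg: "L > 0 \<Longrightarrow> 0 \<le> inflow_increment L e"
  by (cases e) (auto simp: inflow_increment_def)

lemma lyap_increment_le: "L > 0 \<Longrightarrow> lyap_increment L e \<le> 1 / L + inflow_increment L e"
  by (cases e) (auto simp: lyap_increment_def inflow_increment_def growth_def)

lemma lyap_comp_tgt_le:
  assumes L: "L > 0" and \<delta>: "\<delta> \<ge> 0" and n: "n \<in> fin_states" and pos: "rate e n > 0"
  shows "lyap L \<delta> (comp_tgt e n) \<le> lyap L \<delta> n + lyap_increment L e"
proof -
  define a where "a = (real (population n) + 1) / L + \<delta>"
  define b where "b = real (growth e) / L"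
  have ab: "0 \<le> a" "0 \<le> b" using L \<delta> by (simp_all add: a_def b_def)
  have "(real (population (comp_tgt e n)) + 1) / L + \<delta> \<le> a + b"
    using population_comp_tgt_le[OF n pos] L
    by (simp add: a_def b_def add_divide_distrib[symmetric] divide_right_mono)
  then have "lyap L \<delta> (comp_tgt e n) \<le> min 1 (a + b)" unfolding lyap_def by simp
  also have "\<dots> \<le> min 1 a + min 1 b"
    using ab by (simp add: min_def)
  also have "min 1 b \<le> lyap_increment L e"
    using L by (cases e) (auto simp: b_def growth_def lyap_increment_def add.commute)
  finally show ?thesis by (simp add: lyap_def a_def)
qed

definition inflow_tail :: "real \<Rightarrow> real" where
  "inflow_tail L = measure_pmf.expectation mu (\<lambda>x. min 1 ((real x + 1) / L))"

lemma inflow_tail_nonneg: "L > 0 \<Longrightarrow> 0 \<le> inflow_tail L"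
  unfolding inflow_tail_def by (rule integral_nonneg_AE) simp

lemma inflow_tail_tendsto_0: "(inflow_tail \<longlongrightarrow> 0) at_top"
proof -
  have "((\<lambda>L. measure_pmf.expectation mu (\<lambda>x. min 1 ((real x + 1) / L))) \<longlongrightarrow>
      measure_pmf.expectation mu (\<lambda>x. 0 :: real)) at_top"
  proof (rule integral_dominated_convergence_at_top[where w="\<lambda>_. 1"])
    show "AE x in measure_pmf mu. ((\<lambda>L. min 1 ((real x + 1) / L)) \<longlongrightarrow> 0) at_top"
    proof (rule AE_I2)
      fix x :: nat
      have "((\<lambda>L. (real x + 1) / L) \<longlongrightarrow> 0) at_top"
        by (intro tendsto_divide_0[OF tendsto_const] filterlim_at_top_imp_at_infinity filterlim_ident)
      then show "((\<lambda>L. min 1 ((real x + 1) / L)) \<longlongrightarrow> 0) at_top"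
        using tendsto_min[OF tendsto_const[of 1]] by fastforce
    qed
    show "\<forall>\<^sub>F L in at_top. AE x in measure_pmf mu. norm (min 1 ((real x + 1) / L)) \<le> 1"
      using eventually_gt_at_top[of 0] by eventually_elim (auto simp: min_def)
  qed auto
  then show ?thesis by (simp add: inflow_tail_def[abs_def])
qed

lemma inflow_rates_tail:
  assumes L: "L > 0"
  shows "(\<integral>\<^sup>+x. ennreal (rate (Inflow x) n) * ennreal (min 1 ((real x + 1) / L)) \<partial>count_space UNIV) =
    ennreal (kI * inflow_tail L)"
proof -
  have "(\<integral>\<^sup>+x. ennreal (pmf mu x) * ennreal (min 1 ((real x + 1) / L)) \<partial>count_space UNIV) =
      (\<integral>\<^sup>+x. ennreal (min 1 ((real x + 1) / L)) \<partial>measure_pmf mu)"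
    by (simp add: nn_integral_measure_pmf)
  also have "\<dots> = ennreal (inflow_tail L)"
    unfolding inflow_tail_def using L
    by (intro nn_integral_eq_integral measure_pmf.integrable_const_bound[where B=1]) auto
  finally show ?thesis
    using kI inflow_tail_nonneg[OF L] by (simp add: rate_simps ennreal_mult nn_integral_cmult mult.assoc)
qed

lemma nn_integral_lyap_increment:
  assumes n: "n \<in> fin_states" and L: "L > 0"
  shows "(\<integral>\<^sup>+e. ennreal (rate e n) * ennreal (lyap_increment L e) \<partial>count_space UNIV) =
    ennreal ((kb * compartments n + kF * molecules n) / L + kI * inflow_tail L)"
proof -
  have "(\<integral>\<^sup>+e. ennreal (rate e n) * ennreal (lyap_increment L e) \<partial>count_space UNIV) =
      ennreal (kb * compartments n) * ennreal (1 / L) + ennreal (kI * inflow_tail L) +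
      ennreal (kF * molecules n) * ennreal (1 / L)"
    by (simp add: nn_integral_cevent lyap_increment_def growth_def nn_integral_multc
        birth_rates[OF n] frag_rates[OF n] inflow_rates_tail[OF L])
  also have "\<dots> = ennreal ((kb * compartments n + kF * molecules n) / L + kI * inflow_tail L)"
    using L kb kF kI inflow_tail_nonneg[OF L]
    by (simp add: add_divide_distrib ennreal_plus ennreal_mult[symmetric] add_ac)
  finally show ?thesis .
qed

lemma nn_integral_inflow_increment:
  assumes L: "L > 0"
  shows "(\<integral>\<^sup>+e. ennreal (rate e n) * ennreal (inflow_increment L e) \<partial>count_space UNIV) =
    ennreal (kI * inflow_tail L)"
  by (simp add: nn_integral_cevent inflow_increment_def inflow_rates_tail[OF L])

lemma nn_integral_lyap_increment_le_population:
  assumes n: "n \<in> fin_states" and L: "L > 0"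
  shows "(\<integral>\<^sup>+e. ennreal (rate e n) * ennreal (lyap_increment L e) \<partial>count_space {e. comp_tgt e n \<noteq> n}) \<le>
    ennreal ((kb + kF) * (real (population n) + 1) / L + kI * inflow_tail L)"
proof -
  have "(\<integral>\<^sup>+e. ennreal (rate e n) * ennreal (lyap_increment L e) \<partial>count_space {e. comp_tgt e n \<noteq> n}) \<le>
      (\<integral>\<^sup>+e. ennreal (rate e n) * ennreal (lyap_increment L e) \<partial>count_space UNIV)"
    by (rule nn_integral_count_space_subset) simp
  also have "\<dots> = ennreal ((kb * compartments n + kF * molecules n) / L + kI * inflow_tail L)"
    by (rule nn_integral_lyap_increment[OF n L])
  also have "\<dots> \<le> ennreal ((kb + kF) * (real (population n) + 1) / L + kI * inflow_tail L)"
  proof (intro ennreal_leI add_right_mono divide_right_mono)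
    have "real (compartments n) \<le> real (population n) + 1" "real (molecules n) \<le> real (population n) + 1"
      by (simp_all add: population_eq)
    then show "kb * real (compartments n) + kF * real (molecules n) \<le> (kb + kF) * (real (population n) + 1)"
      using kb kF by (simp add: distrib_right add_mono mult_left_mono)
  qed (use L in simp)
  finally show ?thesis .
qed

lemma nn_integral_lyap_increment_le_total_rate:
  assumes n: "n \<in> fin_states" and L: "L > 0"
  shows "(\<integral>\<^sup>+e. ennreal (rate e n) * ennreal (lyap_increment L e) \<partial>count_space {e. comp_tgt e n \<noteq> n}) \<le>
    ennreal (total_rate rate comp_tgt n * (1 / L + inflow_tail L))"
proof -
  let ?Ev = "{e. comp_tgt e n \<noteq> n}" and ?q = "total_rate rate comp_tgt n"
  have "(\<integral>\<^sup>+e. ennreal (rate e n) * ennreal (lyap_increment L e) \<partial>count_space ?Ev) \<le>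
      (\<integral>\<^sup>+e. ennreal (rate e n) * ennreal (1 / L) + ennreal (rate e n) * ennreal (inflow_increment L e)
        \<partial>count_space ?Ev)"
  proof (intro nn_integral_mono)
    fix e
    have "ennreal (lyap_increment L e) \<le> ennreal (1 / L) + ennreal (inflow_increment L e)"
      using lyap_increment_le[OF L, of e] inflow_increment_nonneg[OF L, of e] L
      by (simp flip: ennreal_plus)
    then show "ennreal (rate e n) * ennreal (lyap_increment L e) \<le>
        ennreal (rate e n) * ennreal (1 / L) + ennreal (rate e n) * ennreal (inflow_increment L e)"
      by (simp add: mult_left_mono flip: distrib_left)
  qed
  also have "\<dots> = ennreal ?q * ennreal (1 / L) +
      (\<integral>\<^sup>+e. ennreal (rate e n) * ennreal (inflow_increment L e) \<partial>count_space ?Ev)"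
    by (simp add: nn_integral_add nn_integral_multc ennreal_total_rate[OF n])
  also have "(\<integral>\<^sup>+e. ennreal (rate e n) * ennreal (inflow_increment L e) \<partial>count_space ?Ev) \<le>
      ennreal (kI * inflow_tail L)"
    by (rule order_trans[OF nn_integral_count_space_subset[of _ UNIV]])
      (simp_all add: nn_integral_inflow_increment[OF L])
  also have "ennreal ?q * ennreal (1 / L) + ennreal (kI * inflow_tail L) \<le> ennreal (?q * (1 / L + inflow_tail L))"
  proof -
    have "kI * inflow_tail L \<le> ?q * inflow_tail L"
      using inflow_rate_le_total_rate[OF n] inflow_tail_nonneg[OF L] by (rule mult_right_mono)
    then show ?thesis
      using total_rate_nonneg[OF n] L kI inflow_tail_nonneg[OF L]
      by (simp add: distrib_left ennreal_leI flip: ennreal_mult ennreal_plus)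
  qed
  finally show ?thesis by simp
qed

lemma lyap_jump_integral_le:
  assumes n: "n \<in> fin_states" and L: "L > 0" and \<delta>: "\<delta> \<ge> 0"
  shows "(\<integral>\<^sup>+e. ennreal (rate e n) * ennreal (lyap L \<delta> (comp_tgt e n)) \<partial>count_space {e. comp_tgt e n \<noteq> n}) \<le>
    ennreal (total_rate rate comp_tgt n) * ennreal (lyap L \<delta> n) +
    (\<integral>\<^sup>+e. ennreal (rate e n) * ennreal (lyap_increment L e) \<partial>count_space {e. comp_tgt e n \<noteq> n})"
proof -
  have "ennreal (rate e n) * ennreal (lyap L \<delta> (comp_tgt e n)) \<le>
      ennreal (rate e n) * ennreal (lyap L \<delta> n) + ennreal (rate e n) * ennreal (lyap_increment L e)" for e
  proof (cases "rate e n > 0")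
    case True
    have "ennreal (lyap L \<delta> (comp_tgt e n)) \<le> ennreal (lyap L \<delta> n) + ennreal (lyap_increment L e)"
      using lyap_comp_tgt_le[OF L \<delta> n True] lyap_nonneg[OF L \<delta>] lyap_increment_nonneg[OF L]
      by (simp flip: ennreal_plus)
    then show ?thesis by (simp add: mult_left_mono flip: distrib_left)
  next
    case False
    then show ?thesis using comp_rate_nonneg[of e n] by simp
  qed
  then have "(\<integral>\<^sup>+e. ennreal (rate e n) * ennreal (lyap L \<delta> (comp_tgt e n)) \<partial>count_space {e. comp_tgt e n \<noteq> n}) \<le>
      (\<integral>\<^sup>+e. ennreal (rate e n) * ennreal (lyap L \<delta> n) + ennreal (rate e n) * ennreal (lyap_increment L e)
        \<partial>count_space {e. comp_tgt e n \<noteq> n})"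
    by (intro nn_integral_mono) simp
  then show ?thesis
    by (simp add: nn_integral_add nn_integral_multc ennreal_total_rate[OF n])
qed

lemma lyap_drift:
  assumes n: "n \<in> fin_states" and L: "L > 0" and \<delta>: "\<delta> \<ge> 0"
  obtains J where "0 \<le> J" "J \<le> (kb + kF) * (real (population n) + 1) / L + kI * inflow_tail L"
    "J \<le> total_rate rate comp_tgt n * (1 / L + inflow_tail L)"
    "(\<integral>\<^sup>+e. ennreal (rate e n) * ennreal (lyap L \<delta> (comp_tgt e n)) \<partial>count_space {e. comp_tgt e n \<noteq> n}) \<le>
      ennreal (total_rate rate comp_tgt n * lyap L \<delta> n + J)"
proof -
  define I where "I = (\<integral>\<^sup>+e. ennreal (rate e n) * ennreal (lyap_increment L e)
    \<partial>count_space {e. comp_tgt e n \<noteq> n})"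
  have I_pop: "I \<le> ennreal ((kb + kF) * (real (population n) + 1) / L + kI * inflow_tail L)"
    unfolding I_def by (rule nn_integral_lyap_increment_le_population[OF n L])
  have I_rate: "I \<le> ennreal (total_rate rate comp_tgt n * (1 / L + inflow_tail L))"
    unfolding I_def by (rule nn_integral_lyap_increment_le_total_rate[OF n L])
  have "I < \<top>" using I_pop by (rule le_less_trans) simp
  then have I_eq: "I = ennreal (enn2real I)" by (simp add: ennreal_enn2real_if)
  show ?thesis
  proof (rule that[of "enn2real I"])
    show "0 \<le> enn2real I" by simp
    show "enn2real I \<le> (kb + kF) * (real (population n) + 1) / L + kI * inflow_tail L"
      using I_pop kb kF kI L inflow_tail_nonneg[OF L] by (intro enn2real_leI) auto
    show "enn2real I \<le> total_rate rate comp_tgt n * (1 / L + inflow_tail L)"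
      using I_rate total_rate_nonneg[OF n] L inflow_tail_nonneg[OF L] by (intro enn2real_leI) auto
    show "(\<integral>\<^sup>+e. ennreal (rate e n) * ennreal (lyap L \<delta> (comp_tgt e n)) \<partial>count_space {e. comp_tgt e n \<noteq> n}) \<le>
        ennreal (total_rate rate comp_tgt n * lyap L \<delta> n + enn2real I)"
      using lyap_jump_integral_le[OF n L \<delta>] total_rate_nonneg[OF n] lyap_nonneg[OF L \<delta>, of n]
      by (subst (asm) I_def[symmetric], subst (asm) I_eq) (simp add: ennreal_plus ennreal_mult)
  qed
qed

definition sublevel_rate_bound :: "real \<Rightarrow> real" where
  "sublevel_rate_bound L = (kb + kd + kE + kF) * L + kI + kC * L * L"

lemma total_rate_le_sublevel_rate_bound:
  assumes n: "n \<in> fin_states" and L: "L > 0" and \<delta>: "\<delta> \<ge> 0" and sub: "lyap L \<delta> n < 1"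
  shows "total_rate rate comp_tgt n \<le> sublevel_rate_bound L"
proof -
  have "(real (population n) + 1) / L < 1"
    using sub \<delta> by (simp add: lyap_def)
  then have "real (compartments n) \<le> L" "real (molecules n) \<le> L"
    using L by (simp_all add: population_eq divide_less_eq)
  then have "kb * compartments n \<le> kb * L" "kd * molecules n \<le> kd * L" "kE * compartments n \<le> kE * L"
    "kF * molecules n \<le> kF * L" "kC * compartments n * compartments n \<le> kC * L * L"
    using kb kd kE kF kC by (simp_all add: mult_left_mono mult_mono mult.assoc)
  then have "rate_bound n \<le> sublevel_rate_bound L"
    unfolding rate_bound_def sublevel_rate_bound_def by (simp add: algebra_simps)
  then show ?thesis using total_rate_le_rate_bound[OF n] by linarith
qed

definition discount_rate :: real where
  "discount_rate = 2 * max 1 (kb + kF) / exp (-1)"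

text \<open>The offset is chosen so that, on the sublevel set \<open>lyap < 1\<close>, both bounds of \<open>lyap_drift\<close>
  on the excess drift are absorbed by \<open>mean_discount_contraction\<close>.\<close>

definition lyap_offset :: "real \<Rightarrow> real" where
  "lyap_offset L = kI * inflow_tail L / max 1 (kb + kF) +
    (1 / L + inflow_tail L) / (exp (-1) * (1 - exp (-1)))"

lemma lyap_offset_nonneg: "L > 0 \<Longrightarrow> 0 \<le> lyap_offset L"
  unfolding lyap_offset_def using kI inflow_tail_nonneg[of L] by simp

lemma lyap_offset_tendsto_0: "(lyap_offset \<longlongrightarrow> 0) at_top"
proof -
  have "((\<lambda>L::real. 1 / L) \<longlongrightarrow> 0) at_top"
    using tendsto_divide_0[OF tendsto_const filterlim_at_top_imp_at_infinity[OF filterlim_ident]] by simp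
  then have "(lyap_offset \<longlongrightarrow> kI * 0 / max 1 (kb + kF) + (0 + 0) / (exp (-1) * (1 - exp (-1)))) at_top"
    unfolding lyap_offset_def[abs_def]
    by (intro tendsto_add tendsto_divide tendsto_mult tendsto_const inflow_tail_tendsto_0) auto
  then show ?thesis by simp
qed

lemma lyap_offset_absorbs_drift:
  assumes L: "L > 0" and sub: "lyap L (lyap_offset L) n < 1"
  shows "(kb + kF) * (real (population n) + 1) / L + kI * inflow_tail L \<le>
      max 1 (kb + kF) * lyap L (lyap_offset L) n" (is ?by_population)
    and "1 / L + inflow_tail L \<le> exp (-1) * (1 - exp (-1)) * lyap L (lyap_offset L) n" (is ?by_rate)
proof -
  define c where "c = max 1 (kb + kF)"
  define \<kappa> :: real where "\<kappa> = exp (-1) * (1 - exp (-1))"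
  have c: "c > 0" "kb + kF \<le> c" by (auto simp: c_def)
  have \<kappa>: "\<kappa> > 0" by (simp add: \<kappa>_def)
  have V: "lyap L (lyap_offset L) n = (real (population n) + 1) / L + kI * inflow_tail L / c +
      (1 / L + inflow_tail L) / \<kappa>"
    using sub by (simp add: lyap_def lyap_offset_def c_def \<kappa>_def)
  have "(kb + kF) * (real (population n) + 1) / L \<le> c * (real (population n) + 1) / L"
    using c L by (intro divide_right_mono mult_right_mono) auto
  moreover have "0 \<le> c * ((1 / L + inflow_tail L) / \<kappa>)"
    using c \<kappa> L inflow_tail_nonneg[OF L] by simp
  ultimately show ?by_population
    using c unfolding c_def[symmetric] V by (simp add: distrib_left)
  have "\<kappa> * lyap L (lyap_offset L) n =
      \<kappa> * ((real (population n) + 1) / L + kI * inflow_tail L / c) + (1 / L + inflow_tail L)"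
    unfolding V using \<kappa> by (simp add: distrib_left field_simps)
  moreover have "0 \<le> \<kappa> * ((real (population n) + 1) / L + kI * inflow_tail L / c)"
    using \<kappa> L c kI inflow_tail_nonneg[OF L] by simp
  ultimately show ?by_rate unfolding \<kappa>_def by linarith
qed

lemma lyap_contraction:
  assumes n: "n \<in> fin_states" and L: "L > 0" and sub: "lyap L (lyap_offset L) n < 1"
  shows "ennreal (mean_discount discount_rate (total_rate rate comp_tgt n)) *
      jump_op (\<lambda>n'. ennreal (lyap L (lyap_offset L) n')) n \<le> ennreal (lyap L (lyap_offset L) n)"
proof (cases "total_rate rate comp_tgt n = 0")
  case False
  define q where "q = total_rate rate comp_tgt n"
  define V where "V = lyap L (lyap_offset L)"
  have q: "q > 0" using False total_rate_nonneg[OF n] by (simp add: q_def)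
  have \<delta>: "0 \<le> lyap_offset L" by (rule lyap_offset_nonneg[OF L])
  have V_nonneg: "0 \<le> V n" unfolding V_def by (rule lyap_nonneg[OF L \<delta>])
  obtain J where J: "0 \<le> J" "J \<le> (kb + kF) * (real (population n) + 1) / L + kI * inflow_tail L"
    "J \<le> q * (1 / L + inflow_tail L)"
    and drift: "(\<integral>\<^sup>+e. ennreal (rate e n) * ennreal (V (comp_tgt e n)) \<partial>count_space {e. comp_tgt e n \<noteq> n})
      \<le> ennreal (q * V n + J)"
    using lyap_drift[OF n L \<delta>] unfolding q_def V_def by blast
  have contract: "mean_discount discount_rate q * (V n + J / q) \<le> V n"
    unfolding discount_rate_def
  proof (rule mean_discount_contraction[OF q V_nonneg J(1)])
    show "J \<le> max 1 (kb + kF) * V n"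
      using J(2) lyap_offset_absorbs_drift(1)[OF L sub] by (simp add: V_def)
    show "exp (-1) * (1 - exp (-1)) * V n \<ge> 1 / L + inflow_tail L"
      using lyap_offset_absorbs_drift(2)[OF L sub] by (simp add: V_def)
  qed (use J(3) in auto)
  have "jump_op (\<lambda>n'. ennreal (V n')) n \<le> ennreal (1 / q) * ennreal (q * V n + J)"
    unfolding jump_op_eq_rate_integral[OF n q[unfolded q_def]] q_def[symmetric]
    by (rule mult_left_mono[OF drift]) simp
  also have "\<dots> = ennreal (1 / q * (q * V n + J))"
    using q J V_nonneg by (intro ennreal_mult[symmetric]) auto
  also have "1 / q * (q * V n + J) = V n + J / q"
    using q by (simp add: field_simps)
  finally have "ennreal (mean_discount discount_rate q) * jump_op (\<lambda>n'. ennreal (V n')) n \<le>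
      ennreal (mean_discount discount_rate q) * ennreal (V n + J / q)"
    by (rule mult_left_mono) simp
  also have "\<dots> = ennreal (mean_discount discount_rate q * (V n + J / q))"
    by (rule ennreal_mult'[symmetric, OF mean_discount_nonneg])
  also have "\<dots> \<le> ennreal (V n)"
    using contract by (rule ennreal_leI)
  finally show ?thesis by (simp add: q_def V_def)
qed simp

lemma exists_lyapunov:
  assumes n0: "n0 \<in> fin_states" and \<epsilon>: "\<epsilon> > 0"
  shows "\<exists>V \<rho>. 0 \<le> \<rho> \<and> \<rho> < 1 \<and> V n0 < \<epsilon> \<and> (\<forall>n\<in>fin_states. 0 \<le> V n) \<and>
    (\<forall>n\<in>fin_states. V n < 1 \<longrightarrow> mean_discount discount_rate (total_rate rate comp_tgt n) \<le> \<rho> \<and>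
      ennreal (mean_discount discount_rate (total_rate rate comp_tgt n)) *
        jump_op (\<lambda>n'. ennreal (V n')) n \<le> ennreal (V n))"
proof -
  have lam: "discount_rate > 0" by (simp add: discount_rate_def)
  have "((\<lambda>L. (real (population n0) + 1) / L + lyap_offset L) \<longlongrightarrow> 0 + 0) at_top"
    by (intro tendsto_add lyap_offset_tendsto_0 tendsto_divide_0[OF tendsto_const]
        filterlim_at_top_imp_at_infinity filterlim_ident)
  then have "\<forall>\<^sub>F L in at_top. (real (population n0) + 1) / L + lyap_offset L < \<epsilon> \<and> 0 < L"
    using \<epsilon> by (intro eventually_conj order_tendstoD(2) eventually_gt_at_top) auto
  then obtain L where L: "L > 0" and small: "(real (population n0) + 1) / L + lyap_offset L < \<epsilon>"
    by (auto dest: eventually_happens)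
  define V where "V = lyap L (lyap_offset L)"
  define \<rho> where "\<rho> = mean_discount discount_rate (sublevel_rate_bound L + 1)"
  have Q: "0 \<le> sublevel_rate_bound L" using L kb kd kI kE kF kC by (simp add: sublevel_rate_bound_def)
  have "V n0 < \<epsilon>" using small by (simp add: V_def lyap_def)
  moreover have "\<forall>n\<in>fin_states. 0 \<le> V n"
    using lyap_nonneg[OF L lyap_offset_nonneg[OF L]] by (simp add: V_def)
  moreover have "mean_discount discount_rate (total_rate rate comp_tgt n) \<le> \<rho>"
    if "n \<in> fin_states" "V n < 1" for n
  proof (cases "total_rate rate comp_tgt n = 0")
    case False
    then show ?thesis
      using that total_rate_nonneg[of n] total_rate_le_sublevel_rate_bound[OF that(1) L lyap_offset_nonneg[OF L]]
      unfolding \<rho>_def V_def by (intro mean_discount_mono) (auto simp: discount_rate_def)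
  qed (simp add: \<rho>_def mean_discount_nonneg)
  moreover have "0 \<le> \<rho>" "\<rho> < 1"
    using lam Q by (simp_all add: \<rho>_def mean_discount_nonneg mean_discount_less_one)
  ultimately show ?thesis
    using lyap_contraction[OF _ L] unfolding V_def by blast
qed

theorem compartment_model_non_explosive: "non_explosive rate comp_tgt fin_states TYPE('w)"
  by (rule non_explosive_if_lyapunov[OF _ exists_lyapunov]) (simp add: discount_rate_def)

end

theorem corollary3p3:
  fixes kb kd kI kE kF kC :: real and mu :: "nat pmf" and psi :: "nat \<Rightarrow> nat pmf"
  assumes "kb \<ge> 0" "kd \<ge> 0" "kI \<ge> 0" "kE \<ge> 0" "kF \<ge> 0" "kC \<ge> 0"
    and "\<And>x. set_pmf (psi x) \<subseteq> {..x}"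
  shows "non_explosive (comp_rate kb kd kI kE kF kC mu psi) comp_tgt fin_states TYPE('w)"
proof -
  interpret compartment_model kb kd kI kE kF kC mu psi
    using assms by unfold_locales
  show ?thesis by (rule compartment_model_non_explosive)
qed

end
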